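(* Let $R$ be a principal ideal domain and let $P$ be a lattice equipped with a compatible abelian group structure. Let $M=\bigoplus_{a\in P}M_a$ be a persistence module over $R$ indexed by $P$, viewed as a $P$-graded $R[U_0]$-module, such that each $M_a$ is a finitely generated $R$-module. Then $M$ is graded projective if and only if $M$ is graded free.
   Context: A lattice is a partially ordered set $(P,\le)$ in which every two elements $x,y$ have a join $x\vee y$ (least upper bound) and a meet $x\wedge y$ (greatest lower bound). $P$ has a compatible abelian group structure if $(P,+,0)$ is an abelian group and $a\le b$ implies $a+c\le b+c$ for all $a,b,c\in P$. Let $U_0=\{s\in P: s\ge 0\}$, a commutative monoid under $+$, and let $R[U_0]$ be its monoid ring: elements are finite formal sums $\sum_{s\in U_0}c_st^s$ with $c_s\in R$, $t^st^{s'}=t^{s+s'}$, graded by $\deg(ct^s)=s$. A persistence module over $R$ indexed by $P$ is a functor from $P$ (viewed as a category with a morphism $a\to b$ iff $a\le b$) to $R$-modules; equivalently a $P$-graded $R[U_0]$-module $M=\bigoplus_{a\in P}M_a$, where for $m\in M_a$ and $s\in U_0$, $t^s\cdot m$ is the image of $m$ under the structure map $M_a\to M_{a+s}$. Morphisms are degree-preserving $R[U_0]$-homomorphisms. $M$ is graded free if it has an $R[U_0]$-basis of homogeneous elements; $M$ is graded projective if it is a graded direct summand of a graded free module (equivalently, it has the lifting property against graded epimorphisms in the category of graded modules). *)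

theory Defs
  imports "HOL-Library.Lattice_Algebras" "HOL-Algebra.Module" "HOL-Algebra.Ring_Divisibility"
begin

definition lin_map ::
  "('r, 'c) ring_scheme \<Rightarrow> ('r, 'm) module \<Rightarrow> ('r, 'n) module \<Rightarrow> ('m \<Rightarrow> 'n) \<Rightarrow> bool" where
  "lin_map R M N f \<longleftrightarrow>
     f \<in> carrier M \<rightarrow> carrier N \<and>
     (\<forall>x\<in>carrier M. \<forall>y\<in>carrier M. f (x \<oplus>\<^bsub>M\<^esub> y) = f x \<oplus>\<^bsub>N\<^esub> f y) \<and>
     (\<forall>r\<in>carrier R. \<forall>x\<in>carrier M. f (r \<odot>\<^bsub>M\<^esub> x) = r \<odot>\<^bsub>N\<^esub> f x)"

definition persistence_module ::
  "('r, 'c) ring_scheme \<Rightarrow> ('p::order \<Rightarrow> ('r, 'm) module) \<Rightarrow> ('p \<Rightarrow> 'p \<Rightarrow> 'm \<Rightarrow> 'm) \<Rightarrow> bool" where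
  "persistence_module R M T \<longleftrightarrow>
     (\<forall>a. module R (M a)) \<and>
     (\<forall>a b. a \<le> b \<longrightarrow> lin_map R (M a) (M b) (T a b)) \<and>
     (\<forall>a. \<forall>x\<in>carrier (M a). T a a x = x) \<and>
     (\<forall>a b c. a \<le> b \<longrightarrow> b \<le> c \<longrightarrow> (\<forall>x\<in>carrier (M a). T b c (T a b x) = T a c x))"

text \<open>Morphisms of persistence modules (= degree-preserving R[U_0]-homomorphisms):
  natural transformations.\<close>
definition pmod_hom ::
  "('r, 'c) ring_scheme \<Rightarrow> ('p::order \<Rightarrow> ('r, 'm) module) \<Rightarrow> ('p \<Rightarrow> 'p \<Rightarrow> 'm \<Rightarrow> 'm)
   \<Rightarrow> ('p \<Rightarrow> ('r, 'n) module) \<Rightarrow> ('p \<Rightarrow> 'p \<Rightarrow> 'n \<Rightarrow> 'n) \<Rightarrow> ('p \<Rightarrow> 'm \<Rightarrow> 'n) \<Rightarrow> bool" where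
  "pmod_hom R M T N S h \<longleftrightarrow>
     (\<forall>a. lin_map R (M a) (N a) (h a)) \<and>
     (\<forall>a b. a \<le> b \<longrightarrow> (\<forall>x\<in>carrier (M a). h b (T a b x) = S a b (h a x)))"

text \<open>Graded free: there is a family B of homogeneous elements (pairs (degree, element))
  forming an R[U_0]-basis; equivalently, for every degree b the elements
  t^(b-a) e = T a b e, for (a,e) \<in> B with a \<le> b, form an R-basis (as an indexed family)
  of M b.\<close>
definition graded_free ::
  "('r, 'c) ring_scheme \<Rightarrow> ('p::ordered_ab_group_add \<Rightarrow> ('r, 'm) module) \<Rightarrow> ('p \<Rightarrow> 'p \<Rightarrow> 'm \<Rightarrow> 'm) \<Rightarrow> bool" where
  "graded_free R M T \<longleftrightarrow>
     (\<exists>B. B \<subseteq> {(a, x). x \<in> carrier (M a)} \<and>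
       (\<forall>b. (\<forall>y\<in>carrier (M b). \<exists>S c. finite S \<and> S \<subseteq> {i\<in>B. fst i \<le> b} \<and>
                 c \<in> S \<rightarrow> carrier R \<and>
                 y = finsum (M b) (\<lambda>i. c i \<odot>\<^bsub>M b\<^esub> T (fst i) b (snd i)) S) \<and>
            (\<forall>S c. finite S \<and> S \<subseteq> {i\<in>B. fst i \<le> b} \<and> c \<in> S \<rightarrow> carrier R \<and>
                 finsum (M b) (\<lambda>i. c i \<odot>\<^bsub>M b\<^esub> T (fst i) b (snd i)) S = \<zero>\<^bsub>M b\<^esub>
                 \<longrightarrow> (\<forall>i\<in>S. c i = \<zero>\<^bsub>R\<^esub>))))"

text \<open>Graded projective: M is (isomorphic to) a graded direct summand of a graded free
  module F, i.e. there are graded morphisms i : M \<rightarrow> F and p : F \<rightarrow> M with p \<circ> i = id.\<close>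
definition graded_projective ::
  "'f itself \<Rightarrow> ('r, 'c) ring_scheme \<Rightarrow> ('p::ordered_ab_group_add \<Rightarrow> ('r, 'm) module)
   \<Rightarrow> ('p \<Rightarrow> 'p \<Rightarrow> 'm \<Rightarrow> 'm) \<Rightarrow> bool" where
  "graded_projective _ R M T \<longleftrightarrow>
     (\<exists>(F :: 'p \<Rightarrow> ('r, 'f) module) S i p.
        persistence_module R F S \<and> graded_free R F S \<and>
        pmod_hom R M T F S i \<and> pmod_hom R F S M T p \<and>
        (\<forall>a. \<forall>x\<in>carrier (M a). p a (i a x) = x))"

definition fin_gen :: "('r, 'c) ring_scheme \<Rightarrow> ('r, 'm) module \<Rightarrow> bool" where
  "fin_gen R N \<longleftrightarrow>
     (\<exists>G. finite G \<and> G \<subseteq> carrier N \<and>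
        (\<forall>y\<in>carrier N. \<exists>c. c \<in> G \<rightarrow> carrier R \<and> y = finsum N (\<lambda>x. c x \<odot>\<^bsub>N\<^esub> x) G))"

end

theory Submission
  imports Defs
begin

definition lincomb :: "('r, 'm, 'x) module_scheme \<Rightarrow> ('i \<Rightarrow> 'm) \<Rightarrow> ('i \<Rightarrow> 'r) \<Rightarrow> 'i set \<Rightarrow> 'm" where
  "lincomb N v c S = (\<Oplus>\<^bsub>N\<^esub>i\<in>S. c i \<odot>\<^bsub>N\<^esub> v i)"

definition lin_span ::
  "('r, 'c) ring_scheme \<Rightarrow> ('r, 'm, 'x) module_scheme \<Rightarrow> ('i \<Rightarrow> 'm) \<Rightarrow> 'i set \<Rightarrow> 'm set" where
  "lin_span R N v J = {lincomb N v c S | S c. finite S \<and> S \<subseteq> J \<and> c \<in> S \<rightarrow> carrier R}"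

lemma in_lin_span_iff:
  "y \<in> lin_span R N v J \<longleftrightarrow> (\<exists>S c. finite S \<and> S \<subseteq> J \<and> c \<in> S \<rightarrow> carrier R \<and> y = lincomb N v c S)"
  unfolding lin_span_def by blast

context module
begin

lemma lincomb_closed [simp]:
  "c \<in> S \<rightarrow> carrier R \<Longrightarrow> v \<in> S \<rightarrow> carrier M \<Longrightarrow> lincomb M v c S \<in> carrier M"
  unfolding lincomb_def by (rule M.finsum_closed) auto

lemma lincomb_empty [simp]: "lincomb M v c {} = \<zero>\<^bsub>M\<^esub>"
  unfolding lincomb_def by simp

lemma lincomb_insert:
  "finite S \<Longrightarrow> i \<notin> S \<Longrightarrow> c \<in> insert i S \<rightarrow> carrier R \<Longrightarrow> v \<in> insert i S \<rightarrow> carrier M \<Longrightarrow>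
   lincomb M v c (insert i S) = c i \<odot>\<^bsub>M\<^esub> v i \<oplus>\<^bsub>M\<^esub> lincomb M v c S"
  unfolding lincomb_def by (subst M.finsum_insert) auto

lemma lincomb_singleton:
  "c i \<in> carrier R \<Longrightarrow> v i \<in> carrier M \<Longrightarrow> lincomb M v c {i} = c i \<odot>\<^bsub>M\<^esub> v i"
  unfolding lincomb_def by (simp add: M.finsum_singleton[of i "{i}"])

lemma lincomb_cong:
  "S = S' \<Longrightarrow> c' \<in> S' \<rightarrow> carrier R \<Longrightarrow> v' \<in> S' \<rightarrow> carrier M \<Longrightarrow>
   (\<And>i. i \<in> S' \<Longrightarrow> c i = c' i) \<Longrightarrow> (\<And>i. i \<in> S' \<Longrightarrow> v i = v' i) \<Longrightarrow>
   lincomb M v c S = lincomb M v' c' S'"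
  unfolding lincomb_def by (rule M.add.finprod_cong') (auto simp: Pi_iff)

lemma lincomb_extend_zero:
  assumes "finite S'" "S \<subseteq> S'" "\<And>i. i \<in> S' - S \<Longrightarrow> c i = \<zero>"
    and "c \<in> S' \<rightarrow> carrier R" "v \<in> S' \<rightarrow> carrier M"
  shows "lincomb M v c S' = lincomb M v c S"
  unfolding lincomb_def
  by (rule M.add.finprod_mono_neutral_cong_right) (use assms in \<open>auto simp: Pi_def\<close>)

lemma lincomb_extend:
  assumes "finite S'" "S \<subseteq> S'" "c \<in> S \<rightarrow> carrier R" "v \<in> S' \<rightarrow> carrier M"
  shows "lincomb M v (\<lambda>i. if i \<in> S then c i else \<zero>) S' = lincomb M v c S"
proof -
  have "lincomb M v (\<lambda>i. if i \<in> S then c i else \<zero>) S' = lincomb M v (\<lambda>i. if i \<in> S then c i else \<zero>) S"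
    by (rule lincomb_extend_zero) (use assms in auto)
  also have "\<dots> = lincomb M v c S"
    by (rule lincomb_cong) (use assms in auto)
  finally show ?thesis .
qed

lemma lincomb_add:
  assumes "c \<in> S \<rightarrow> carrier R" "d \<in> S \<rightarrow> carrier R" "v \<in> S \<rightarrow> carrier M"
  shows "lincomb M v (\<lambda>i. c i \<oplus> d i) S = lincomb M v c S \<oplus>\<^bsub>M\<^esub> lincomb M v d S"
proof -
  have "lincomb M v (\<lambda>i. c i \<oplus> d i) S = (\<Oplus>\<^bsub>M\<^esub>i\<in>S. c i \<odot>\<^bsub>M\<^esub> v i \<oplus>\<^bsub>M\<^esub> d i \<odot>\<^bsub>M\<^esub> v i)"
    unfolding lincomb_def
    by (rule M.add.finprod_cong') (use assms in \<open>auto simp: smult_l_distr Pi_iff\<close>)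
  also have "\<dots> = lincomb M v c S \<oplus>\<^bsub>M\<^esub> lincomb M v d S"
    unfolding lincomb_def by (rule M.finsum_addf) (use assms in \<open>auto simp: Pi_iff\<close>)
  finally show ?thesis .
qed

lemma lincomb_smult:
  assumes "r \<in> carrier R" "c \<in> S \<rightarrow> carrier R" "v \<in> S \<rightarrow> carrier M" "finite S"
  shows "r \<odot>\<^bsub>M\<^esub> lincomb M v c S = lincomb M v (\<lambda>i. r \<otimes> c i) S"
proof -
  have "r \<odot>\<^bsub>M\<^esub> lincomb M v c S = (\<Oplus>\<^bsub>M\<^esub>i\<in>S. r \<odot>\<^bsub>M\<^esub> (c i \<odot>\<^bsub>M\<^esub> v i))"
    unfolding lincomb_def by (rule finsum_smult_ldistr) (use assms in auto)
  also have "\<dots> = lincomb M v (\<lambda>i. r \<otimes> c i) S"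
    unfolding lincomb_def
    by (rule M.add.finprod_cong') (use assms in \<open>auto simp: smult_assoc1 Pi_iff\<close>)
  finally show ?thesis .
qed

lemma lincomb_diff:
  assumes "c \<in> S \<rightarrow> carrier R" "d \<in> S \<rightarrow> carrier R" "v \<in> S \<rightarrow> carrier M" "finite S"
  shows "lincomb M v (\<lambda>i. c i \<ominus> d i) S = lincomb M v c S \<ominus>\<^bsub>M\<^esub> lincomb M v d S"
proof -
  have "lincomb M v (\<lambda>i. c i \<ominus> d i) S = lincomb M v (\<lambda>i. c i \<oplus> (\<ominus> \<one>) \<otimes> d i) S"
    by (rule lincomb_cong) (use assms in \<open>auto simp: R.minus_eq R.l_minus Pi_iff\<close>)
  also have "\<dots> = lincomb M v c S \<oplus>\<^bsub>M\<^esub> lincomb M v (\<lambda>i. (\<ominus> \<one>) \<otimes> d i) S"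
    by (rule lincomb_add) (use assms in auto)
  also have "\<dots> = lincomb M v c S \<ominus>\<^bsub>M\<^esub> lincomb M v d S"
    using assms by (simp flip: lincomb_smult add: smult_l_minus M.minus_eq)
  finally show ?thesis .
qed

lemma lincomb_reindex:
  assumes "inj_on h A" "c \<in> h ` A \<rightarrow> carrier R" "v \<in> h ` A \<rightarrow> carrier M"
  shows "lincomb M v c (h ` A) = lincomb M (\<lambda>k. v (h k)) (\<lambda>k. c (h k)) A"
  unfolding lincomb_def by (rule M.finsum_reindex) (use assms in \<open>auto simp: Pi_iff\<close>)

lemma lin_span_carrier: "v \<in> J \<rightarrow> carrier M \<Longrightarrow> lin_span R M v J \<subseteq> carrier M"
  unfolding lin_span_def by (force intro: lincomb_closed)

lemma zero_in_lin_span: "\<zero>\<^bsub>M\<^esub> \<in> lin_span R M v J"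
  unfolding lin_span_def by (force intro: exI[of _ "{}"])

lemma lin_span_add:
  assumes "v \<in> J \<rightarrow> carrier M" "x \<in> lin_span R M v J" "y \<in> lin_span R M v J"
  shows "x \<oplus>\<^bsub>M\<^esub> y \<in> lin_span R M v J"
proof -
  obtain S c where S: "finite S" "S \<subseteq> J" "c \<in> S \<rightarrow> carrier R" "x = lincomb M v c S"
    using assms(2) unfolding lin_span_def by blast
  obtain S' c' where S': "finite S'" "S' \<subseteq> J" "c' \<in> S' \<rightarrow> carrier R" "y = lincomb M v c' S'"
    using assms(3) unfolding lin_span_def by blast
  define d where "d i = (if i \<in> S then c i else \<zero>)" for i
  define d' where "d' i = (if i \<in> S' then c' i else \<zero>)" for i
  have U: "finite (S \<union> S')" "S \<union> S' \<subseteq> J" "v \<in> S \<union> S' \<rightarrow> carrier M"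
    using S S' assms(1) by auto
  have d: "d \<in> S \<union> S' \<rightarrow> carrier R" "d' \<in> S \<union> S' \<rightarrow> carrier R"
    using S S' by (auto simp: d_def d'_def)
  have "x \<oplus>\<^bsub>M\<^esub> y = lincomb M v d (S \<union> S') \<oplus>\<^bsub>M\<^esub> lincomb M v d' (S \<union> S')"
    using S S' U unfolding d_def d'_def by (simp add: lincomb_extend)
  also have "\<dots> = lincomb M v (\<lambda>i. d i \<oplus> d' i) (S \<union> S')"
    using d U by (simp add: lincomb_add)
  finally show ?thesis
    using U d unfolding lin_span_def by force
qed

lemma lin_span_smult:
  assumes "v \<in> J \<rightarrow> carrier M" "r \<in> carrier R" "x \<in> lin_span R M v J"
  shows "r \<odot>\<^bsub>M\<^esub> x \<in> lin_span R M v J"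
proof -
  obtain S c where S: "finite S" "S \<subseteq> J" "c \<in> S \<rightarrow> carrier R" "x = lincomb M v c S"
    using assms(3) unfolding lin_span_def by blast
  then have "r \<odot>\<^bsub>M\<^esub> x = lincomb M v (\<lambda>i. r \<otimes> c i) S"
    using assms by (auto intro: lincomb_smult)
  then show ?thesis
    using S assms(2) unfolding lin_span_def by force
qed

lemma lin_span_lincomb:
  assumes "v \<in> J \<rightarrow> carrier M" "finite K" "a \<in> K \<rightarrow> carrier R" "w \<in> K \<rightarrow> lin_span R M v J"
  shows "lincomb M w a K \<in> lin_span R M v J"
  using assms(2-4)
proof (induction K rule: finite_induct)
  case empty
  then show ?case by (simp add: zero_in_lin_span)
next
  case (insert k K)
  have "w \<in> insert k K \<rightarrow> carrier M"
    using insert.prems(2) lin_span_carrier[OF assms(1)] by blast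
  then show ?case
    using insert lin_span_add[OF assms(1)] lin_span_smult[OF assms(1)] by (simp add: lincomb_insert)
qed

lemma generator_in_lin_span:
  assumes "j \<in> J" "v j \<in> carrier M"
  shows "v j \<in> lin_span R M v J"
  using assms lincomb_singleton[of "\<lambda>_. \<one>" j v] unfolding lin_span_def
  by (force intro!: exI[of _ "{j}"])

end

lemma lin_map_closed: "lin_map R N N' f \<Longrightarrow> x \<in> carrier N \<Longrightarrow> f x \<in> carrier N'"
  unfolding lin_map_def by blast

lemma lin_map_zero:
  assumes "module R N" "module R N'" "lin_map R N N' f"
  shows "f \<zero>\<^bsub>N\<^esub> = \<zero>\<^bsub>N'\<^esub>"
proof -
  interpret N: module R N by fact
  interpret N': module R N' by fact
  have "f \<zero>\<^bsub>N\<^esub> \<oplus>\<^bsub>N'\<^esub> f \<zero>\<^bsub>N\<^esub> = f \<zero>\<^bsub>N\<^esub>"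
    using assms(3) unfolding lin_map_def by (metis N.M.zero_closed N.M.l_zero)
  then show ?thesis
    using lin_map_closed[OF assms(3) N.M.zero_closed] N'.M.add.l_cancel_one' by simp
qed

lemma lin_map_lincomb:
  assumes "module R N" "module R N'" "lin_map R N N' f" "finite S"
    and "c \<in> S \<rightarrow> carrier R" "v \<in> S \<rightarrow> carrier N"
  shows "f (lincomb N v c S) = lincomb N' (\<lambda>i. f (v i)) c S"
  using assms(4-6)
proof (induction S rule: finite_induct)
  case empty
  interpret N: module R N by fact
  interpret N': module R N' by fact
  show ?case using lin_map_zero[OF assms(1-3)] by simp
next
  case (insert x S)
  interpret N: module R N by fact
  interpret N': module R N' by fact
  have "f (lincomb N v c (insert x S)) = f (c x \<odot>\<^bsub>N\<^esub> v x \<oplus>\<^bsub>N\<^esub> lincomb N v c S)"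
    using insert by (simp add: N.lincomb_insert)
  also have "\<dots> = c x \<odot>\<^bsub>N'\<^esub> f (v x) \<oplus>\<^bsub>N'\<^esub> f (lincomb N v c S)"
    using assms(3) insert unfolding lin_map_def by auto
  also have "\<dots> = lincomb N' (\<lambda>i. f (v i)) c (insert x S)"
    using insert lin_map_closed[OF assms(3)] by (subst N'.lincomb_insert) auto
  finally show ?case .
qed

locale module_basis = module +
  fixes v :: "'i \<Rightarrow> 'c" and J :: "'i set"
  assumes basis_closed: "v \<in> J \<rightarrow> carrier M"
    and basis_spans: "carrier M \<subseteq> lin_span R M v J"
    and basis_independent: "\<And>S c. finite S \<Longrightarrow> S \<subseteq> J \<Longrightarrow> c \<in> S \<rightarrow> carrier R \<Longrightarrow>
      lincomb M v c S = \<zero>\<^bsub>M\<^esub> \<Longrightarrow> \<forall>i\<in>S. c i = \<zero>"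

definition coord ::
  "('r, 'c) ring_scheme \<Rightarrow> ('r, 'm, 'x) module_scheme \<Rightarrow> ('i \<Rightarrow> 'm) \<Rightarrow> 'i set \<Rightarrow> 'm \<Rightarrow> 'i \<Rightarrow> 'r" where
  "coord R N v J y = (SOME c. (\<forall>i. c i \<in> carrier R) \<and> finite {i. c i \<noteq> \<zero>\<^bsub>R\<^esub>} \<and>
      {i. c i \<noteq> \<zero>\<^bsub>R\<^esub>} \<subseteq> J \<and> y = lincomb N v c {i. c i \<noteq> \<zero>\<^bsub>R\<^esub>})"

context module_basis
begin

lemma lincomb_inj:
  assumes "finite S" "S \<subseteq> J" "c \<in> S \<rightarrow> carrier R" "d \<in> S \<rightarrow> carrier R"
    and "lincomb M v c S = lincomb M v d S" "i \<in> S"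
  shows "c i = d i"
proof -
  have v: "v \<in> S \<rightarrow> carrier M"
    using assms(2) basis_closed by auto
  have "lincomb M v (\<lambda>i. c i \<ominus> d i) S = lincomb M v c S \<ominus>\<^bsub>M\<^esub> lincomb M v d S"
    using assms(1,3,4) v by (rule lincomb_diff[rotated 3])
  also have "\<dots> = \<zero>\<^bsub>M\<^esub>"
    unfolding assms(5) using assms(4) v by (simp add: M.r_neg M.minus_eq)
  finally have "\<forall>i\<in>S. c i \<ominus> d i = \<zero>"
    using assms(3,4) by (intro basis_independent[OF assms(1,2)]) auto
  then have "c i \<ominus> d i = \<zero>"
    using assms(6) by blast
  then show ?thesis
    using assms(3,4,6) by (metis Pi_mem R.add.inv_closed R.minus_eq R.minus_equality R.minus_minus)
qed

lemma coord_exists: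
  assumes "y \<in> carrier M"
  shows "\<exists>c. (\<forall>i. c i \<in> carrier R) \<and> finite {i. c i \<noteq> \<zero>} \<and> {i. c i \<noteq> \<zero>} \<subseteq> J \<and>
    y = lincomb M v c {i. c i \<noteq> \<zero>}"
proof -
  have "y \<in> lin_span R M v J"
    using assms basis_spans by blast
  then obtain S c where S: "finite S" "S \<subseteq> J" "c \<in> S \<rightarrow> carrier R" "y = lincomb M v c S"
    unfolding lin_span_def by blast
  define d where "d = (\<lambda>i. if i \<in> S then c i else \<zero>)"
  have supp: "{i. d i \<noteq> \<zero>} \<subseteq> S"
    unfolding d_def by auto
  have "y = lincomb M v d S"
    using S basis_closed unfolding d_def by (subst lincomb_extend) auto
  also have "\<dots> = lincomb M v d {i. d i \<noteq> \<zero>}"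
    by (rule lincomb_extend_zero) (use S supp basis_closed in \<open>auto simp: d_def\<close>)
  finally have "y = lincomb M v d {i. d i \<noteq> \<zero>}" .
  moreover have "finite {i. d i \<noteq> \<zero>}"
    using S(1) supp by (rule finite_subset[rotated])
  moreover have "\<forall>i. d i \<in> carrier R"
    using S(3) by (auto simp: d_def)
  ultimately show ?thesis
    using S(2) supp by blast
qed

abbreviation coordinate :: "'c \<Rightarrow> 'i \<Rightarrow> 'a" where
  "coordinate \<equiv> coord R M v J"

lemma coord_spec:
  assumes "y \<in> carrier M"
  shows coord_closed: "coordinate y i \<in> carrier R"
    and coord_support_finite: "finite {i. coordinate y i \<noteq> \<zero>}"
    and coord_support: "{i. coordinate y i \<noteq> \<zero>} \<subseteq> J"
    and lincomb_coord_support: "lincomb M v (coordinate y) {i. coordinate y i \<noteq> \<zero>} = y"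
  using someI_ex[OF coord_exists[OF assms]] unfolding coord_def by (blast, blast, blast, metis)

lemma lincomb_coord:
  assumes "y \<in> carrier M" "finite S" "S \<subseteq> J" "{i. coordinate y i \<noteq> \<zero>} \<subseteq> S"
  shows "lincomb M v (coordinate y) S = y"
proof -
  have "lincomb M v (coordinate y) S = lincomb M v (coordinate y) {i. coordinate y i \<noteq> \<zero>}"
    by (rule lincomb_extend_zero) (use assms basis_closed coord_closed in auto)
  with lincomb_coord_support[OF assms(1)] show ?thesis
    by simp
qed

lemma coord_unique:
  assumes "finite S" "S \<subseteq> J" "c \<in> S \<rightarrow> carrier R" "y = lincomb M v c S"
  shows "coordinate y i = (if i \<in> S then c i else \<zero>)"
proof -
  have y: "y \<in> carrier M"
    unfolding assms(4) by (rule lincomb_closed) (use assms basis_closed in auto)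
  define U where "U = S \<union> {i. coordinate y i \<noteq> \<zero>}"
  have U: "finite U" "S \<subseteq> U" "U \<subseteq> J" "v \<in> U \<rightarrow> carrier M"
    using assms coord_support_finite[OF y] coord_support[OF y] basis_closed by (auto simp: U_def)
  have eq: "lincomb M v (coordinate y) U = lincomb M v (\<lambda>i. if i \<in> S then c i else \<zero>) U"
    using lincomb_coord[OF y U(1,3)] lincomb_extend[OF U(1,2) assms(3) U(4)] assms(4)
    by (simp add: U_def)
  have "coordinate y i = (if i \<in> S then c i else \<zero>)" if "i \<in> U"
    by (rule lincomb_inj[OF U(1,3) _ _ eq that]) (use assms(3) coord_closed[OF y] in auto)
  then show ?thesis
    using U(2) by (cases "i \<in> U") (auto simp: U_def)
qed

lemma coord_zero: "coordinate \<zero>\<^bsub>M\<^esub> i = \<zero>"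
  using coord_unique[of "{}" "\<lambda>_. \<zero>" "\<zero>\<^bsub>M\<^esub>" i] by simp

lemma coord_eq_zero_imp_zero:
  assumes "y \<in> carrier M" "\<And>i. coordinate y i = \<zero>"
  shows "y = \<zero>\<^bsub>M\<^esub>"
  using lincomb_coord[of y "{}"] assms by simp

lemma coord_add:
  assumes x: "x \<in> carrier M" and y: "y \<in> carrier M"
  shows "coordinate (x \<oplus>\<^bsub>M\<^esub> y) i = coordinate x i \<oplus> coordinate y i"
proof -
  define U where "U = {i. coordinate x i \<noteq> \<zero>} \<union> {i. coordinate y i \<noteq> \<zero>}"
  have U: "finite U" "U \<subseteq> J" "v \<in> U \<rightarrow> carrier M"
    using coord_support_finite coord_support basis_closed x y by (auto simp: U_def)
  have "x \<oplus>\<^bsub>M\<^esub> y = lincomb M v (coordinate x) U \<oplus>\<^bsub>M\<^esub> lincomb M v (coordinate y) U"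
    using lincomb_coord[OF x U(1,2)] lincomb_coord[OF y U(1,2)] by (simp add: U_def)
  also have "\<dots> = lincomb M v (\<lambda>i. coordinate x i \<oplus> coordinate y i) U"
    using x y U by (simp add: lincomb_add coord_closed)
  finally have eq: "x \<oplus>\<^bsub>M\<^esub> y = lincomb M v (\<lambda>i. coordinate x i \<oplus> coordinate y i) U" .
  have "coordinate (x \<oplus>\<^bsub>M\<^esub> y) i = (if i \<in> U then coordinate x i \<oplus> coordinate y i else \<zero>)"
    using x y by (intro coord_unique[OF U(1,2) _ eq]) (auto simp: coord_closed)
  then show ?thesis
    using x y by (auto simp: coord_closed U_def)
qed

lemma coord_smult:
  assumes r: "r \<in> carrier R" and x: "x \<in> carrier M"
  shows "coordinate (r \<odot>\<^bsub>M\<^esub> x) i = r \<otimes> coordinate x i"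
proof -
  define U where "U = {i. coordinate x i \<noteq> \<zero>}"
  have U: "finite U" "U \<subseteq> J" "v \<in> U \<rightarrow> carrier M"
    using coord_support_finite coord_support basis_closed x by (auto simp: U_def)
  have "r \<odot>\<^bsub>M\<^esub> x = r \<odot>\<^bsub>M\<^esub> lincomb M v (coordinate x) U"
    using lincomb_coord[OF x U(1,2)] by (simp add: U_def)
  also have "\<dots> = lincomb M v (\<lambda>i. r \<otimes> coordinate x i) U"
    using r x U by (simp add: lincomb_smult coord_closed)
  finally have eq: "r \<odot>\<^bsub>M\<^esub> x = lincomb M v (\<lambda>i. r \<otimes> coordinate x i) U" .
  have "coordinate (r \<odot>\<^bsub>M\<^esub> x) i = (if i \<in> U then r \<otimes> coordinate x i else \<zero>)"
    using r x by (intro coord_unique[OF U(1,2) _ eq]) (auto simp: coord_closed)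
  then show ?thesis
    using r x by (auto simp: coord_closed U_def)
qed

lemma coord_lincomb:
  assumes "finite K" "a \<in> K \<rightarrow> carrier R" "w \<in> K \<rightarrow> carrier M"
  shows "coordinate (lincomb M w a K) i = (\<Oplus>k\<in>K. a k \<otimes> coordinate (w k) i)"
  using assms
proof (induction K rule: finite_induct)
  case empty
  then show ?case by (simp add: coord_zero)
next
  case (insert x K)
  then have "w x \<in> carrier M" "a x \<in> carrier R" "lincomb M w a K \<in> carrier M"
    "(\<lambda>k. a k \<otimes> coordinate (w k) i) \<in> K \<rightarrow> carrier R"
    by (auto simp: Pi_iff intro: coord_closed)
  with insert show ?case
    by (simp add: lincomb_insert coord_add coord_smult coord_closed R.finsum_insert)
qed

end

lemma fin_gen_coord_support:
  assumes basis: "module_basis R F v J" and N: "module R N" and fg: "fin_gen R N"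
    and f: "lin_map R N F f"
  shows "\<exists>I. finite I \<and> (\<forall>z\<in>carrier N. \<forall>i. coord R F v J (f z) i \<noteq> \<zero>\<^bsub>R\<^esub> \<longrightarrow> i \<in> I)"
proof -
  interpret F: module_basis R F v J by (rule basis)
  interpret N: module R N by (rule N)
  obtain G where G: "finite G" "G \<subseteq> carrier N"
    and span: "\<And>z. z \<in> carrier N \<Longrightarrow> \<exists>c. c \<in> G \<rightarrow> carrier R \<and> z = lincomb N (\<lambda>x. x) c G"
    using fg unfolding fin_gen_def lincomb_def by blast
  define I where "I = (\<Union>g\<in>G. {i. coord R F v J (f g) i \<noteq> \<zero>\<^bsub>R\<^esub>})"
  have fG: "(\<lambda>g. f g) \<in> G \<rightarrow> carrier F"
    using G(2) lin_map_closed[OF f] by auto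
  have "i \<in> I" if z: "z \<in> carrier N" and i: "coord R F v J (f z) i \<noteq> \<zero>\<^bsub>R\<^esub>" for z i
  proof (rule ccontr)
    assume "i \<notin> I"
    then have zero: "coord R F v J (f g) i = \<zero>\<^bsub>R\<^esub>" if "g \<in> G" for g
      using that by (auto simp: I_def)
    obtain c where c: "c \<in> G \<rightarrow> carrier R" "z = lincomb N (\<lambda>x. x) c G"
      using span[OF z] by blast
    have "f z = lincomb F (\<lambda>g. f g) c G"
      unfolding c(2) using G c(1) by (intro lin_map_lincomb[OF N F.module_axioms f]) auto
    then have "coord R F v J (f z) i = (\<Oplus>\<^bsub>R\<^esub>g\<in>G. c g \<otimes>\<^bsub>R\<^esub> coord R F v J (f g) i)"
      using F.coord_lincomb[OF G(1) c(1) fG] by simp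
    also have "\<dots> = (\<Oplus>\<^bsub>R\<^esub>g\<in>G. \<zero>\<^bsub>R\<^esub>)"
      using c(1) zero by (intro F.R.finsum_cong') (auto simp: Pi_iff)
    finally show False
      using i by simp
  qed
  moreover have "finite I"
    unfolding I_def using G fG F.coord_support_finite by auto
  ultimately show ?thesis
    by blast
qed

definition image_submodule :: "('r, 'c) ring_scheme \<Rightarrow> ('x \<Rightarrow> 'i \<Rightarrow> 'r) \<Rightarrow> 'x set \<Rightarrow> bool" where
  "image_submodule R \<phi> X \<longleftrightarrow>
     (\<forall>x\<in>X. \<forall>i. \<phi> x i \<in> carrier R) \<and>
     (\<exists>z\<in>X. \<forall>i. \<phi> z i = \<zero>\<^bsub>R\<^esub>) \<and>
     (\<forall>x\<in>X. \<forall>y\<in>X. \<exists>z\<in>X. \<forall>i. \<phi> z i = \<phi> x i \<oplus>\<^bsub>R\<^esub> \<phi> y i) \<and>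
     (\<forall>r\<in>carrier R. \<forall>x\<in>X. \<exists>z\<in>X. \<forall>i. \<phi> z i = r \<otimes>\<^bsub>R\<^esub> \<phi> x i)"

definition image_spans :: "('r, 'c) ring_scheme \<Rightarrow> ('x \<Rightarrow> 'i \<Rightarrow> 'r) \<Rightarrow> 'x set \<Rightarrow> 'x set \<Rightarrow> bool" where
  "image_spans R \<phi> G X \<longleftrightarrow>
     (\<forall>x\<in>X. \<exists>c\<in>G \<rightarrow> carrier R. \<forall>i. \<phi> x i = (\<Oplus>\<^bsub>R\<^esub>g\<in>G. c g \<otimes>\<^bsub>R\<^esub> \<phi> g i))"

definition image_independent :: "('r, 'c) ring_scheme \<Rightarrow> ('x \<Rightarrow> 'i \<Rightarrow> 'r) \<Rightarrow> 'x set \<Rightarrow> bool" where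
  "image_independent R \<phi> G \<longleftrightarrow>
     (\<forall>c\<in>G \<rightarrow> carrier R. (\<forall>i. (\<Oplus>\<^bsub>R\<^esub>g\<in>G. c g \<otimes>\<^bsub>R\<^esub> \<phi> g i) = \<zero>\<^bsub>R\<^esub>) \<longrightarrow> (\<forall>g\<in>G. c g = \<zero>\<^bsub>R\<^esub>))"

lemma image_submoduleD:
  assumes "image_submodule R \<phi> X"
  shows image_submodule_closed: "x \<in> X \<Longrightarrow> \<phi> x i \<in> carrier R"
    and image_submodule_zero: "\<exists>z\<in>X. \<forall>i. \<phi> z i = \<zero>\<^bsub>R\<^esub>"
    and image_submodule_add: "x \<in> X \<Longrightarrow> y \<in> X \<Longrightarrow> \<exists>z\<in>X. \<forall>i. \<phi> z i = \<phi> x i \<oplus>\<^bsub>R\<^esub> \<phi> y i"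
    and image_submodule_smult: "r \<in> carrier R \<Longrightarrow> x \<in> X \<Longrightarrow> \<exists>z\<in>X. \<forall>i. \<phi> z i = r \<otimes>\<^bsub>R\<^esub> \<phi> x i"
  using assms unfolding image_submodule_def by blast+

context principal_domain
begin

lemma image_submodule_coordinate_ideal:
  assumes "image_submodule R \<phi> X"
  shows "ideal ((\<lambda>x. \<phi> x a) ` X) R"
proof -
  let ?I = "(\<lambda>x. \<phi> x a) ` X"
  have closed: "?I \<subseteq> carrier R"
    using image_submodule_closed[OF assms] by blast
  have add: "\<phi> x a \<oplus> \<phi> y a \<in> ?I" if xy: "x \<in> X" "y \<in> X" for x y
  proof -
    obtain z where "z \<in> X" "\<forall>i. \<phi> z i = \<phi> x i \<oplus> \<phi> y i"
      using image_submodule_add[OF assms xy] by blast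
    then show ?thesis by (metis image_eqI)
  qed
  have smult: "r \<otimes> \<phi> x a \<in> ?I" if rx: "r \<in> carrier R" "x \<in> X" for r x
  proof -
    obtain z where "z \<in> X" "\<forall>i. \<phi> z i = r \<otimes> \<phi> x i"
      using image_submodule_smult[OF assms rx] by blast
    then show ?thesis by (metis image_eqI)
  qed
  have zero: "\<zero> \<in> ?I"
  proof -
    obtain z where "z \<in> X" "\<forall>i. \<phi> z i = \<zero>"
      using image_submodule_zero[OF assms] by blast
    then show ?thesis by (metis image_eqI)
  qed
  have neg: "\<ominus> \<phi> x a \<in> ?I" if "x \<in> X" for x
    using smult[OF _ that, of "\<ominus> \<one>"] image_submodule_closed[OF assms that] by (simp add: l_minus)
  show ?thesis
  proof (rule idealI[OF ring_axioms])
    show "subgroup ?I (add_monoid R)"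
    proof
      show "x \<otimes>\<^bsub>add_monoid R\<^esub> y \<in> ?I" if "x \<in> ?I" "y \<in> ?I" for x y
        using that add by auto
      show "inv\<^bsub>add_monoid R\<^esub> x \<in> ?I" if "x \<in> ?I" for x
        using that neg by (auto simp flip: a_inv_def)
    qed (use closed zero in auto)
    show "r \<otimes> b \<in> ?I" if "b \<in> ?I" "r \<in> carrier R" for r b
      using that smult by blast
    show "b \<otimes> r \<in> ?I" if "b \<in> ?I" "r \<in> carrier R" for r b
      using that smult closed by (auto simp: m_comm)
  qed
qed

lemma image_submodule_kernel:
  assumes "image_submodule R \<phi> X"
  shows "image_submodule R \<phi> {x\<in>X. \<phi> x a = \<zero>}"
  unfolding image_submodule_def
proof (intro conjI ballI)
  show "\<exists>z\<in>{x\<in>X. \<phi> x a = \<zero>}. \<forall>i. \<phi> z i = \<zero>"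
    using image_submodule_zero[OF assms] by auto
  show "\<exists>z\<in>{x\<in>X. \<phi> x a = \<zero>}. \<forall>i. \<phi> z i = \<phi> x i \<oplus> \<phi> y i"
    if xy: "x \<in> {x\<in>X. \<phi> x a = \<zero>}" "y \<in> {x\<in>X. \<phi> x a = \<zero>}" for x y
  proof -
    obtain z where "z \<in> X" "\<forall>i. \<phi> z i = \<phi> x i \<oplus> \<phi> y i"
      using image_submodule_add[OF assms, of x y] xy by auto
    with xy show ?thesis by auto
  qed
  show "\<exists>z\<in>{x\<in>X. \<phi> x a = \<zero>}. \<forall>i. \<phi> z i = r \<otimes> \<phi> x i"
    if rx: "r \<in> carrier R" "x \<in> {x\<in>X. \<phi> x a = \<zero>}" for r x
  proof -
    obtain z where "z \<in> X" "\<forall>i. \<phi> z i = r \<otimes> \<phi> x i"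
      using image_submodule_smult[OF assms, of r x] rx by auto
    with rx show ?thesis by auto
  qed
qed (use image_submodule_closed[OF assms] in auto)

lemma image_spans_insert:
  assumes sub: "image_submodule R \<phi> X"
    and G': "finite G'" "G' \<subseteq> X" "image_spans R \<phi> G' {x\<in>X. \<phi> x a = \<zero>}"
    and x0: "x0 \<in> X" "x0 \<notin> G'" "(\<lambda>x. \<phi> x a) ` X = PIdl (\<phi> x0 a)"
  shows "image_spans R \<phi> (insert x0 G') X"
  unfolding image_spans_def
proof
  fix x assume x: "x \<in> X"
  have "\<phi> x a \<in> PIdl (\<phi> x0 a)"
    using x x0(3) by blast
  then obtain r where r: "r \<in> carrier R" "\<phi> x a = r \<otimes> \<phi> x0 a"
    unfolding cgenideal_def by blast
  obtain y where y: "y \<in> X" "\<forall>i. \<phi> y i = (\<ominus> r) \<otimes> \<phi> x0 i"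
    using image_submodule_smult[OF sub _ x0(1), of "\<ominus> r"] r(1) by auto
  obtain z where z: "z \<in> X" "\<forall>i. \<phi> z i = \<phi> x i \<oplus> \<phi> y i"
    using image_submodule_add[OF sub x y(1)] by blast
  have closed: "\<phi> w i \<in> carrier R" if "w \<in> X" for w i
    using image_submodule_closed[OF sub that] .
  have "\<phi> z a = \<zero>"
    using z y r closed[OF x0(1)] by (simp add: l_minus r_neg)
  then obtain c' where c': "c' \<in> G' \<rightarrow> carrier R" "\<forall>i. \<phi> z i = (\<Oplus>g\<in>G'. c' g \<otimes> \<phi> g i)"
    using G'(3) z(1) unfolding image_spans_def by blast
  define c where "c = c'(x0 := r)"
  have c: "c \<in> insert x0 G' \<rightarrow> carrier R"
    using c' r by (auto simp: c_def)
  have "\<phi> x i = (\<Oplus>g\<in>insert x0 G'. c g \<otimes> \<phi> g i)" for i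
  proof -
    have G'_carrier: "(\<lambda>g. c g \<otimes> \<phi> g i) \<in> G' \<rightarrow> carrier R"
      using c G'(2) closed by (auto intro!: m_closed)
    have "(\<Oplus>g\<in>G'. c g \<otimes> \<phi> g i) = (\<Oplus>g\<in>G'. c' g \<otimes> \<phi> g i)"
      by (rule finsum_cong') (use c' G'(2) closed x0(2) in \<open>auto simp: c_def intro!: m_closed\<close>)
    then have "(\<Oplus>g\<in>insert x0 G'. c g \<otimes> \<phi> g i) = r \<otimes> \<phi> x0 i \<oplus> \<phi> z i"
      using G'_carrier G'(1) x0(2) c' r closed[OF x0(1)] by (simp add: finsum_insert c_def)
    also have "\<dots> = \<phi> x i"
      using z y r closed x x0(1) by (simp add: l_minus a_lcomm[of "r \<otimes> \<phi> x0 i"] r_neg)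
    finally show ?thesis by simp
  qed
  then show "\<exists>c\<in>insert x0 G' \<rightarrow> carrier R. \<forall>i. \<phi> x i = (\<Oplus>g\<in>insert x0 G'. c g \<otimes> \<phi> g i)"
    using c by blast
qed

lemma image_independent_insert:
  assumes closed: "\<And>x i. x \<in> X \<Longrightarrow> \<phi> x i \<in> carrier R"
    and G': "finite G'" "G' \<subseteq> X" "\<forall>g\<in>G'. \<phi> g a = \<zero>" "image_independent R \<phi> G'"
    and x0: "x0 \<in> X" "\<phi> x0 a \<noteq> \<zero>"
  shows "image_independent R \<phi> (insert x0 G')"
  unfolding image_independent_def
proof (intro ballI impI)
  fix c g
  assume c: "c \<in> insert x0 G' \<rightarrow> carrier R"
    and rel: "\<forall>i. (\<Oplus>g\<in>insert x0 G'. c g \<otimes> \<phi> g i) = \<zero>"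
    and g: "g \<in> insert x0 G'"
  have x0G': "x0 \<notin> G'"
    using G'(3) x0(2) by auto
  have G'_closed: "(\<lambda>g. c g \<otimes> \<phi> g i) \<in> G' \<rightarrow> carrier R" for i
    using c G'(2) closed by (auto intro!: m_closed)
  have split: "(\<Oplus>g\<in>insert x0 G'. c g \<otimes> \<phi> g i) = c x0 \<otimes> \<phi> x0 i \<oplus> (\<Oplus>g\<in>G'. c g \<otimes> \<phi> g i)" for i
    using G'(1) x0G' G'_closed c closed[OF x0(1)] by (simp add: finsum_insert)
  have "(\<Oplus>g\<in>G'. c g \<otimes> \<phi> g a) = (\<Oplus>g\<in>G'. \<zero>)"
    by (rule finsum_cong') (use c G'(3) in \<open>auto simp: Pi_iff\<close>)
  then have "c x0 \<otimes> \<phi> x0 a = \<zero>"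
    using rel split[of a] c closed[OF x0(1)] by simp
  then have c0: "c x0 = \<zero>"
    using integral c closed[OF x0(1)] x0(2) by blast
  have "(\<Oplus>g\<in>G'. c g \<otimes> \<phi> g i) = \<zero>" for i
    using rel split[of i] c0 closed[OF x0(1)] finsum_closed[OF G'_closed] by simp
  then have "\<forall>g\<in>G'. c g = \<zero>"
    using G'(4) c unfolding image_independent_def by blast
  then show "c g = \<zero>"
    using g c0 by blast
qed

theorem image_submodule_basis:
  assumes "finite I"
  shows "image_submodule R \<phi> X \<Longrightarrow> \<forall>x\<in>X. \<forall>i. i \<notin> I \<longrightarrow> \<phi> x i = \<zero> \<Longrightarrow>
    \<exists>G. finite G \<and> G \<subseteq> X \<and> image_spans R \<phi> G X \<and> image_independent R \<phi> G"
  using assms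
proof (induction I arbitrary: X rule: finite_induct)
  case empty
  then have "image_spans R \<phi> {} X"
    unfolding image_spans_def by auto
  then show ?case
    unfolding image_independent_def by blast
next
  case (insert a I X)
  let ?K = "{x\<in>X. \<phi> x a = \<zero>}"
  have "\<forall>x\<in>?K. \<forall>i. i \<notin> I \<longrightarrow> \<phi> x i = \<zero>"
  proof (intro ballI allI impI)
    fix x i assume "x \<in> ?K" "i \<notin> I"
    then show "\<phi> x i = \<zero>"
      using insert.prems(2) by (cases "i = a") auto
  qed
  from insert.IH[OF image_submodule_kernel[OF insert.prems(1), of a] this]
  obtain G' where G': "finite G'" "G' \<subseteq> ?K" "image_spans R \<phi> G' ?K" "image_independent R \<phi> G'"
    by (elim exE conjE) (rule that; assumption)
  obtain d where d: "d \<in> carrier R" "(\<lambda>x. \<phi> x a) ` X = PIdl d"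
    using exists_gen[OF image_submodule_coordinate_ideal[OF insert.prems(1)]] by blast
  show ?case
  proof (cases "d = \<zero>")
    case True
    have "\<phi> x a = \<zero>" if "x \<in> X" for x
    proof -
      have "\<phi> x a \<in> PIdl d"
        using that d(2) by blast
      then obtain r where "r \<in> carrier R" "\<phi> x a = r \<otimes> d"
        unfolding cgenideal_def by blast
      then show ?thesis
        using True by simp
    qed
    then have "?K = X"
      by blast
    then show ?thesis
      using G' by (intro exI[of _ G']) simp
  next
    case False
    have "d \<in> (\<lambda>x. \<phi> x a) ` X"
      using d cgenideal_self by simp
    then obtain x0 where x0: "x0 \<in> X" "\<phi> x0 a = d"
      by blast
    have G'X: "G' \<subseteq> X" and G'a: "\<forall>g\<in>G'. \<phi> g a = \<zero>"
      using G'(2) by auto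
    with x0 False have x0G': "x0 \<notin> G'"
      by blast
    have "image_spans R \<phi> (insert x0 G') X"
      using image_spans_insert[OF insert.prems(1) G'(1) G'X G'(3) x0(1) x0G'] d(2) x0(2) by simp
    moreover have "image_independent R \<phi> (insert x0 G')"
      using image_independent_insert[OF image_submodule_closed[OF insert.prems(1)] G'(1) G'X G'a G'(4) x0(1)]
        x0(2) False by simp
    moreover have "finite (insert x0 G')" "insert x0 G' \<subseteq> X"
      using G'(1) G'X x0(1) by auto
    ultimately show ?thesis
      by blast
  qed
qed

end

lemma (in ring) image_independent_subset:
  assumes indep: "image_independent R \<phi> G" and G: "finite G" "G0 \<subseteq> G"
    and closed: "\<And>g i. g \<in> G \<Longrightarrow> \<phi> g i \<in> carrier R"
  shows "image_independent R \<phi> G0"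
  unfolding image_independent_def
proof (intro ballI impI)
  fix c g assume c: "c \<in> G0 \<rightarrow> carrier R" and rel: "\<forall>i. (\<Oplus>g\<in>G0. c g \<otimes> \<phi> g i) = \<zero>"
    and g: "g \<in> G0"
  define c' where "c' g = (if g \<in> G0 then c g else \<zero>)" for g
  have c': "c' \<in> G \<rightarrow> carrier R"
    using c by (auto simp: c'_def)
  have "(\<Oplus>g\<in>G. c' g \<otimes> \<phi> g i) = (\<Oplus>g\<in>G0. c g \<otimes> \<phi> g i)" for i
    by (rule add.finprod_mono_neutral_cong_right)
      (use G c' closed in \<open>auto simp: c'_def Pi_iff intro!: m_closed\<close>)
  then have "\<forall>g\<in>G. c' g = \<zero>"
    using indep c' rel unfolding image_independent_def by simp
  then have "c' g = \<zero>"
    using g G(2) by blast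
  then show "c g = \<zero>"
    using g by (simp add: c'_def)
qed

context
  fixes R :: "('r, 'c) ring_scheme" and M :: "'p::order \<Rightarrow> ('r, 'm) module" and T
  assumes persistence: "persistence_module R M T"
begin

lemma persistence_module_module: "module R (M a)"
  using persistence unfolding persistence_module_def by auto

lemma persistence_module_lin_map: "a \<le> b \<Longrightarrow> lin_map R (M a) (M b) (T a b)"
  using persistence unfolding persistence_module_def by auto

lemma persistence_module_closed: "a \<le> b \<Longrightarrow> x \<in> carrier (M a) \<Longrightarrow> T a b x \<in> carrier (M b)"
  by (rule lin_map_closed[OF persistence_module_lin_map])

lemma persistence_module_id: "x \<in> carrier (M a) \<Longrightarrow> T a a x = x"
  using persistence unfolding persistence_module_def by auto

lemma persistence_module_comp:
  "a \<le> b \<Longrightarrow> b \<le> c \<Longrightarrow> x \<in> carrier (M a) \<Longrightarrow> T b c (T a b x) = T a c x"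
  using persistence unfolding persistence_module_def by auto

end

context
  fixes R :: "('r, 'c) ring_scheme" and M :: "'p::order \<Rightarrow> ('r, 'm) module" and T N S h
  assumes hom: "pmod_hom R M T N S h"
begin

lemma pmod_hom_lin_map: "lin_map R (M a) (N a) (h a)"
  using hom unfolding pmod_hom_def by auto

lemma pmod_hom_closed: "x \<in> carrier (M a) \<Longrightarrow> h a x \<in> carrier (N a)"
  by (rule lin_map_closed[OF pmod_hom_lin_map])

lemma pmod_hom_natural: "a \<le> b \<Longrightarrow> x \<in> carrier (M a) \<Longrightarrow> h b (T a b x) = S a b (h a x)"
  using hom unfolding pmod_hom_def by auto

end

definition translate :: "('p \<Rightarrow> 'p \<Rightarrow> 'm \<Rightarrow> 'm) \<Rightarrow> 'p \<Rightarrow> 'p \<times> 'm \<Rightarrow> 'm" where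
  "translate T b i = T (fst i) b (snd i)"

definition graded_basis ::
  "('r, 'c) ring_scheme \<Rightarrow> ('p::order \<Rightarrow> ('r, 'm) module) \<Rightarrow> ('p \<Rightarrow> 'p \<Rightarrow> 'm \<Rightarrow> 'm) \<Rightarrow> ('p \<times> 'm) set \<Rightarrow> bool"
  where
  "graded_basis R M T B \<longleftrightarrow>
     B \<subseteq> {(a, x). x \<in> carrier (M a)} \<and> (\<forall>b. module_basis R (M b) (translate T b) {i\<in>B. fst i \<le> b})"

lemma translate_closed:
  assumes "persistence_module R M T" "B \<subseteq> {(a, x). x \<in> carrier (M a)}"
  shows "translate T b \<in> {i\<in>B. fst i \<le> b} \<rightarrow> carrier (M b)"
  using assms persistence_module_closed[OF assms(1)] unfolding translate_def by auto

lemma graded_free_iff_graded_basis: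
  assumes "persistence_module R M T"
  shows "graded_free R M T \<longleftrightarrow> (\<exists>B. graded_basis R M T B)"
proof -
  have "module_basis R (M b) (translate T b) {i\<in>B. fst i \<le> b} \<longleftrightarrow>
      (\<forall>y\<in>carrier (M b). \<exists>S c. finite S \<and> S \<subseteq> {i\<in>B. fst i \<le> b} \<and> c \<in> S \<rightarrow> carrier R \<and>
          y = (\<Oplus>\<^bsub>M b\<^esub>i\<in>S. c i \<odot>\<^bsub>M b\<^esub> T (fst i) b (snd i))) \<and>
      (\<forall>S c. finite S \<and> S \<subseteq> {i\<in>B. fst i \<le> b} \<and> c \<in> S \<rightarrow> carrier R \<and>
          (\<Oplus>\<^bsub>M b\<^esub>i\<in>S. c i \<odot>\<^bsub>M b\<^esub> T (fst i) b (snd i)) = \<zero>\<^bsub>M b\<^esub> \<longrightarrow> (\<forall>i\<in>S. c i = \<zero>\<^bsub>R\<^esub>))"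
    (is "_ \<longleftrightarrow> ?free B b")
    if "B \<subseteq> {(a, x). x \<in> carrier (M a)}" for B b
    using persistence_module_module[OF assms] translate_closed[OF assms that, of b]
    by (simp add: module_basis_def module_basis_axioms_def subset_iff in_lin_span_iff lincomb_def translate_def imp_conjL Ball_def)
  then have "graded_basis R M T B \<longleftrightarrow> B \<subseteq> {(a, x). x \<in> carrier (M a)} \<and> (\<forall>b. ?free B b)" for B
    unfolding graded_basis_def by (intro conj_cong refl) simp
  then show ?thesis
    unfolding graded_free_def by (simp only:)
qed


lemma translate_lincomb:
  assumes pm: "persistence_module R M T" and B: "B \<subseteq> {(a, x). x \<in> carrier (M a)}"
    and md: "m \<le> d" and A: "finite A" "A \<subseteq> {i\<in>B. fst i \<le> m}" "c \<in> A \<rightarrow> carrier R"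
  shows "T m d (lincomb (M m) (translate T m) c A) = lincomb (M d) (translate T d) c A"
proof -
  have A': "A \<subseteq> {i\<in>B. fst i \<le> d}"
    using A(2) md by auto
  interpret Md: module R "M d"
    by (rule persistence_module_module[OF pm])
  have tA: "translate T m \<in> A \<rightarrow> carrier (M m)" "translate T d \<in> A \<rightarrow> carrier (M d)"
    by (rule subsetD[OF Pi_anti_mono[OF A(2)] translate_closed[OF pm B]],
        rule subsetD[OF Pi_anti_mono[OF A'] translate_closed[OF pm B]])
  have "T m d (lincomb (M m) (translate T m) c A) = lincomb (M d) (\<lambda>k. T m d (translate T m k)) c A"
    by (rule lin_map_lincomb[OF persistence_module_module[OF pm] persistence_module_module[OF pm]
          persistence_module_lin_map[OF pm md] A(1,3) tA(1)])
  also have "\<dots> = lincomb (M d) (translate T d) c A"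
  proof (rule Md.lincomb_cong[OF refl A(3) tA(2)])
    fix k assume "k \<in> A"
    then have "fst k \<le> m" "snd k \<in> carrier (M (fst k))"
      using A(2) B by auto
    then show "T m d (translate T m k) = translate T d k"
      unfolding translate_def by (rule persistence_module_comp[OF pm _ md])
  qed simp
  finally show ?thesis .
qed

lemma lin_span_translate:
  assumes pm: "persistence_module R M T" and B: "B \<subseteq> {(a, x). x \<in> carrier (M a)}"
    and dd': "d \<le> d'" and y: "y \<in> lin_span R (M d) (translate T d) {k\<in>B. fst k \<le> d}"
  shows "T d d' y \<in> lin_span R (M d') (translate T d') {k\<in>B. fst k \<le> d'}"
proof -
  obtain K c where K: "finite K" "K \<subseteq> {k\<in>B. fst k \<le> d}" "c \<in> K \<rightarrow> carrier R"
    and y_eq: "y = lincomb (M d) (translate T d) c K"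
    using y unfolding in_lin_span_iff by blast
  have "T d d' y = lincomb (M d') (translate T d') c K"
    unfolding y_eq by (rule translate_lincomb[OF pm B dd' K])
  moreover have "K \<subseteq> {k\<in>B. fst k \<le> d'}"
    using K(2) dd' by auto
  ultimately show ?thesis
    unfolding in_lin_span_iff using K(1,3) by blast
qed

lemma module_basis_image:
  assumes basis: "module_basis R M v J" and N: "module R N"
    and f: "lin_map R M N f" and g: "lin_map R N M g"
    and gf: "\<And>x. x \<in> carrier M \<Longrightarrow> g (f x) = x" and fg: "\<And>y. y \<in> carrier N \<Longrightarrow> f (g y) = y"
  shows "module_basis R N (\<lambda>j. f (v j)) J"
proof -
  interpret M: module_basis R M v J by (rule basis)
  interpret N: module R N by (rule N)
  show ?thesis
  proof
    show "(\<lambda>j. f (v j)) \<in> J \<rightarrow> carrier N"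
      using M.basis_closed lin_map_closed[OF f] by auto
    show "carrier N \<subseteq> lin_span R N (\<lambda>j. f (v j)) J"
    proof
      fix y assume y: "y \<in> carrier N"
      then have "g y \<in> lin_span R M v J"
        using M.basis_spans lin_map_closed[OF g] by blast
      then obtain S c where S: "finite S" "S \<subseteq> J" "c \<in> S \<rightarrow> carrier R" "g y = lincomb M v c S"
        unfolding in_lin_span_iff by blast
      have "y = f (lincomb M v c S)"
        using fg[OF y] S(4) by simp
      also have "\<dots> = lincomb N (\<lambda>j. f (v j)) c S"
        using S M.basis_closed by (intro lin_map_lincomb[OF M.module_axioms N f]) auto
      finally show "y \<in> lin_span R N (\<lambda>j. f (v j)) J"
        unfolding in_lin_span_iff using S by blast
    qed
    show "\<forall>i\<in>S. c i = \<zero>\<^bsub>R\<^esub>" if S: "finite S" "S \<subseteq> J" "c \<in> S \<rightarrow> carrier R"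
      and rel: "lincomb N (\<lambda>j. f (v j)) c S = \<zero>\<^bsub>N\<^esub>" for S c
    proof (rule M.basis_independent[OF S])
      have vS: "v \<in> S \<rightarrow> carrier M"
        using S(2) M.basis_closed by auto
      have "lincomb M v c S = g (f (lincomb M v c S))"
        using gf S(3) vS by simp
      also have "\<dots> = g \<zero>\<^bsub>N\<^esub>"
        using rel lin_map_lincomb[OF M.module_axioms N f S(1,3) vS] by simp
      also have "\<dots> = \<zero>\<^bsub>M\<^esub>"
        by (rule lin_map_zero[OF N M.module_axioms g])
      finally show "lincomb M v c S = \<zero>\<^bsub>M\<^esub>" .
    qed
  qed
qed

lemma module_basis_reindex:
  assumes basis: "module_basis R M u J" and h: "inj_on h J" and w: "\<And>j. j \<in> J \<Longrightarrow> w (h j) = u j"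
  shows "module_basis R M w (h ` J)"
proof -
  interpret M: module_basis R M u J by (rule basis)
  have w_closed: "w \<in> h ` J \<rightarrow> carrier M"
    using M.basis_closed w by auto
  have reindex: "lincomb M w c (h ` S) = lincomb M u (\<lambda>j. c (h j)) S"
    if "S \<subseteq> J" "c \<in> h ` S \<rightarrow> carrier R" for S c
  proof -
    have "lincomb M w c (h ` S) = lincomb M (\<lambda>j. w (h j)) (\<lambda>j. c (h j)) S"
      using that w_closed inj_on_subset[OF h] by (intro M.lincomb_reindex) auto
    also have "\<dots> = lincomb M u (\<lambda>j. c (h j)) S"
      using that w M.basis_closed by (intro M.lincomb_cong) auto
    finally show ?thesis .
  qed
  show ?thesis
  proof
    show "w \<in> h ` J \<rightarrow> carrier M"
      by (rule w_closed)
    show "carrier M \<subseteq> lin_span R M w (h ` J)"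
    proof
      fix y assume "y \<in> carrier M"
      then have "y \<in> lin_span R M u J"
        using M.basis_spans by blast
      then obtain S c where S: "finite S" "S \<subseteq> J" "c \<in> S \<rightarrow> carrier R" "y = lincomb M u c S"
        unfolding in_lin_span_iff by blast
      define c' where "c' = (\<lambda>i. c (the_inv_into J h i))"
      have c'h: "c' (h j) = c j" if "j \<in> S" for j
        using that S(2) h by (simp add: c'_def the_inv_into_f_f subset_iff)
      have c': "c' \<in> h ` S \<rightarrow> carrier R"
        using S(3) c'h by auto
      have "lincomb M w c' (h ` S) = lincomb M u (\<lambda>j. c' (h j)) S"
        by (rule reindex[OF S(2) c'])
      also have "\<dots> = lincomb M u c S"
        using S(2,3) c'h M.basis_closed by (intro M.lincomb_cong) auto
      finally have "y = lincomb M w c' (h ` S)"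
        using S(4) by simp
      moreover have "finite (h ` S)" "h ` S \<subseteq> h ` J"
        using S by auto
      ultimately show "y \<in> lin_span R M w (h ` J)"
        unfolding in_lin_span_iff using c' by blast
    qed
    show "\<forall>i\<in>S'. c i = \<zero>\<^bsub>R\<^esub>" if S': "finite S'" "S' \<subseteq> h ` J" "c \<in> S' \<rightarrow> carrier R"
      and rel: "lincomb M w c S' = \<zero>\<^bsub>M\<^esub>" for S' c
    proof -
      define S where "S = {j\<in>J. h j \<in> S'}"
      have S: "h ` S = S'" "S \<subseteq> J"
        using S'(2) by (auto simp: S_def)
      have "finite S"
        using S'(1) S inj_on_subset[OF h] finite_image_iff by metis
      moreover have "lincomb M u (\<lambda>j. c (h j)) S = \<zero>\<^bsub>M\<^esub>"
        using reindex[OF S(2)] S(1) S'(3) rel by simp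
      ultimately have "\<forall>j\<in>S. c (h j) = \<zero>\<^bsub>R\<^esub>"
        using S'(3) S by (intro M.basis_independent) auto
      then show ?thesis
        using S(1) by blast
    qed
  qed
qed

lemma graded_basis_iso:
  fixes M :: "'p::order \<Rightarrow> ('r, 'm) module" and F :: "'p \<Rightarrow> ('r, 'f) module"
  assumes pmM: "persistence_module R M T" and pmF: "persistence_module R F S"
    and basis: "graded_basis R M T B"
    and hi: "pmod_hom R M T F S \<iota>" and hp: "pmod_hom R F S M T \<pi>"
    and pi: "\<And>a x. x \<in> carrier (M a) \<Longrightarrow> \<pi> a (\<iota> a x) = x"
    and ip: "\<And>a y. y \<in> carrier (F a) \<Longrightarrow> \<iota> a (\<pi> a y) = y"
  shows "graded_basis R F S ((\<lambda>k. (fst k, \<iota> (fst k) (snd k))) ` B)"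
proof -
  define h where "h k = (fst k, \<iota> (fst k) (snd k))" for k :: "'p \<times> 'm"
  have B: "B \<subseteq> {(a, x). x \<in> carrier (M a)}"
    and basis_at: "\<And>b. module_basis R (M b) (translate T b) {k\<in>B. fst k \<le> b}"
    using basis unfolding graded_basis_def by auto
  have snd_closed: "snd k \<in> carrier (M (fst k))" if "k \<in> B" for k
    using that B by auto
  have inj: "inj_on h B"
  proof (rule inj_onI)
    fix k k' assume k: "k \<in> B" "k' \<in> B" "h k = h k'"
    then have fst_eq: "fst k = fst k'" and "\<iota> (fst k) (snd k) = \<iota> (fst k) (snd k')"
      by (auto simp: h_def)
    then have "\<pi> (fst k) (\<iota> (fst k) (snd k)) = \<pi> (fst k') (\<iota> (fst k') (snd k'))"
      by simp
    then have "snd k = snd k'"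
      using pi[OF snd_closed[OF k(1)]] pi[OF snd_closed[OF k(2)]] by simp
    with fst_eq show "k = k'"
      by (rule prod_eqI)
  qed
  have "module_basis R (F b) (translate S b) {i \<in> h ` B. fst i \<le> b}" for b
  proof -
    have "module_basis R (F b) (\<lambda>k. \<iota> b (translate T b k)) {k\<in>B. fst k \<le> b}"
      by (rule module_basis_image[OF basis_at persistence_module_module[OF pmF]
            pmod_hom_lin_map[OF hi] pmod_hom_lin_map[OF hp] pi ip])
    moreover have "translate S b (h k) = \<iota> b (translate T b k)" if "k \<in> {k\<in>B. fst k \<le> b}" for k
      using that snd_closed pmod_hom_natural[OF hi] by (simp add: h_def translate_def)
    moreover have "inj_on h {k\<in>B. fst k \<le> b}"
      by (rule inj_on_subset[OF inj]) auto
    ultimately have "module_basis R (F b) (translate S b) (h ` {k\<in>B. fst k \<le> b})"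
      by (intro module_basis_reindex)
    moreover have "{i \<in> h ` B. fst i \<le> b} = h ` {k\<in>B. fst k \<le> b}"
      by (auto simp: h_def)
    ultimately show ?thesis
      by simp
  qed
  moreover have "h ` B \<subseteq> {(a, y). y \<in> carrier (F a)}"
    using snd_closed pmod_hom_closed[OF hi] by (auto simp: h_def)
  ultimately show ?thesis
    unfolding graded_basis_def h_def by simp
qed

locale graded_free_module =
  fixes R :: "('r, 'c) ring_scheme"
    and F :: "'p::lattice \<Rightarrow> ('r, 'f) module"
    and S :: "'p \<Rightarrow> 'p \<Rightarrow> 'f \<Rightarrow> 'f"
    and B :: "('p \<times> 'f) set"
  assumes free_persistence: "persistence_module R F S"
    and free_basis: "graded_basis R F S B"
begin

lemma basis_homogeneous: "B \<subseteq> {(a, x). x \<in> carrier (F a)}"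
  using free_basis unfolding graded_basis_def by blast

lemma basis_at: "module_basis R (F b) (translate S b) {i\<in>B. fst i \<le> b}"
  using free_basis unfolding graded_basis_def by blast

abbreviation gcoord :: "'p \<Rightarrow> 'f \<Rightarrow> 'p \<times> 'f \<Rightarrow> 'r" where
  "gcoord b \<equiv> coord R (F b) (translate S b) {i\<in>B. fst i \<le> b}"

lemma gcoord_translate:
  assumes db: "d \<le> b" and y: "y \<in> carrier (F d)"
  shows "gcoord b (S d b y) i = gcoord d y i"
proof -
  interpret Fd: module_basis R "F d" "translate S d" "{i\<in>B. fst i \<le> d}" by (rule basis_at)
  interpret Fb: module_basis R "F b" "translate S b" "{i\<in>B. fst i \<le> b}" by (rule basis_at)
  define U where "U = {i. gcoord d y i \<noteq> \<zero>\<^bsub>R\<^esub>}"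
  have U: "finite U" "U \<subseteq> {i\<in>B. fst i \<le> d}" "gcoord d y \<in> U \<rightarrow> carrier R"
    using Fd.coord_support_finite[OF y] Fd.coord_support[OF y] Fd.coord_closed[OF y] by (auto simp: U_def)
  have "S d b y = S d b (lincomb (F d) (translate S d) (gcoord d y) U)"
    using Fd.lincomb_coord[OF y U(1,2)] by (simp add: U_def)
  also have "\<dots> = lincomb (F b) (translate S b) (gcoord d y) U"
    by (rule translate_lincomb[OF free_persistence basis_homogeneous db U])
  finally have "gcoord b (S d b y) i = (if i \<in> U then gcoord d y i else \<zero>\<^bsub>R\<^esub>)"
    using U db by (intro Fb.coord_unique) auto
  then show ?thesis
    by (simp add: U_def)
qed

lemma support_top:
  assumes y: "y \<in> carrier (F d)" and ne: "{i. gcoord d y i \<noteq> \<zero>\<^bsub>R\<^esub>} \<noteq> {}"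
  defines "m \<equiv> Sup_fin (fst ` {i. gcoord d y i \<noteq> \<zero>\<^bsub>R\<^esub>})"
  shows "m \<le> d" and "\<exists>f\<in>carrier (F m). y = S m d f"
proof -
  interpret Fd: module_basis R "F d" "translate S d" "{i\<in>B. fst i \<le> d}" by (rule basis_at)
  interpret Fm: module R "F m" by (rule persistence_module_module[OF free_persistence])
  define A where "A = {i. gcoord d y i \<noteq> \<zero>\<^bsub>R\<^esub>}"
  have A: "finite A" "A \<subseteq> {i\<in>B. fst i \<le> d}" "gcoord d y \<in> A \<rightarrow> carrier R"
    using Fd.coord_support_finite[OF y] Fd.coord_support[OF y] Fd.coord_closed[OF y] by (auto simp: A_def)
  have fin: "finite (fst ` A)" and "fst ` A \<noteq> {}"
    using A(1) ne by (auto simp: A_def)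
  then show md: "m \<le> d"
    unfolding m_def A_def[symmetric] using A(2) by (auto intro: Sup_fin.boundedI)
  have Am: "A \<subseteq> {i\<in>B. fst i \<le> m}"
    unfolding m_def A_def[symmetric] using A(2) Sup_fin.coboundedI[OF fin] by auto
  define f where "f = lincomb (F m) (translate S m) (gcoord d y) A"
  have "f \<in> carrier (F m)"
    unfolding f_def using A(3) translate_closed[OF free_persistence basis_homogeneous, of m] Am
    by (intro Fm.lincomb_closed) auto
  moreover have "S m d f = y"
    unfolding f_def translate_lincomb[OF free_persistence basis_homogeneous md A(1) Am A(3)]
    by (rule Fd.lincomb_coord[OF y A(1,2)]) (simp add: A_def)
  ultimately show "\<exists>f\<in>carrier (F m). y = S m d f"
    by metis
qed

end

locale graded_retract = graded_free_module R F S B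
  for R :: "('r, 'c) ring_scheme"
    and F :: "'p::lattice \<Rightarrow> ('r, 'f) module"
    and S :: "'p \<Rightarrow> 'p \<Rightarrow> 'f \<Rightarrow> 'f"
    and B :: "('p \<times> 'f) set" +
  fixes M :: "'p \<Rightarrow> ('r, 'm) module" and T :: "'p \<Rightarrow> 'p \<Rightarrow> 'm \<Rightarrow> 'm"
    and \<iota> :: "'p \<Rightarrow> 'm \<Rightarrow> 'f" and \<pi> :: "'p \<Rightarrow> 'f \<Rightarrow> 'm"
  assumes persistence: "persistence_module R M T"
    and \<iota>_hom: "pmod_hom R M T F S \<iota>"
    and \<pi>_hom: "pmod_hom R F S M T \<pi>"
    and retraction: "\<And>a x. x \<in> carrier (M a) \<Longrightarrow> \<pi> a (\<iota> a x) = x"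
begin

abbreviation icoord :: "'p \<Rightarrow> 'm \<Rightarrow> 'p \<times> 'f \<Rightarrow> 'r" where
  "icoord a z \<equiv> gcoord a (\<iota> a z)"

lemma icoord_props:
  assumes "z \<in> carrier (M a)"
  shows icoord_closed: "icoord a z i \<in> carrier R"
    and icoord_support_finite: "finite {i. icoord a z i \<noteq> \<zero>\<^bsub>R\<^esub>}"
    and icoord_support: "icoord a z i \<noteq> \<zero>\<^bsub>R\<^esub> \<Longrightarrow> i \<in> B \<and> fst i \<le> a"
  using module_basis.coord_closed[OF basis_at] module_basis.coord_support_finite[OF basis_at]
    module_basis.coord_support[OF basis_at] pmod_hom_closed[OF \<iota>_hom assms] by blast+

lemma icoord_translate: "d \<le> b \<Longrightarrow> z \<in> carrier (M d) \<Longrightarrow> icoord b (T d b z) i = icoord d z i"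
  using pmod_hom_natural[OF \<iota>_hom] gcoord_translate pmod_hom_closed[OF \<iota>_hom] by simp

lemma icoord_add:
  "x \<in> carrier (M a) \<Longrightarrow> y \<in> carrier (M a) \<Longrightarrow> icoord a (x \<oplus>\<^bsub>M a\<^esub> y) i = icoord a x i \<oplus>\<^bsub>R\<^esub> icoord a y i"
  using pmod_hom_lin_map[OF \<iota>_hom] pmod_hom_closed[OF \<iota>_hom] module_basis.coord_add[OF basis_at]
  unfolding lin_map_def by simp

lemma icoord_smult:
  "r \<in> carrier R \<Longrightarrow> x \<in> carrier (M a) \<Longrightarrow> icoord a (r \<odot>\<^bsub>M a\<^esub> x) i = r \<otimes>\<^bsub>R\<^esub> icoord a x i"
  using pmod_hom_lin_map[OF \<iota>_hom] pmod_hom_closed[OF \<iota>_hom] module_basis.coord_smult[OF basis_at]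
  unfolding lin_map_def by simp

lemma icoord_eq_zero_imp_zero:
  assumes z: "z \<in> carrier (M a)" and zero: "\<And>i. icoord a z i = \<zero>\<^bsub>R\<^esub>"
  shows "z = \<zero>\<^bsub>M a\<^esub>"
proof -
  have "\<iota> a z = \<zero>\<^bsub>F a\<^esub>"
    using module_basis.coord_eq_zero_imp_zero[OF basis_at pmod_hom_closed[OF \<iota>_hom z]] zero by blast
  then show ?thesis
    using retraction[OF z] lin_map_zero[OF persistence_module_module[OF free_persistence]
        persistence_module_module[OF persistence] pmod_hom_lin_map[OF \<pi>_hom]] by simp
qed

lemma icoord_zero: "icoord a \<zero>\<^bsub>M a\<^esub> i = \<zero>\<^bsub>R\<^esub>"
  using lin_map_zero[OF persistence_module_module[OF persistence]
      persistence_module_module[OF free_persistence] pmod_hom_lin_map[OF \<iota>_hom]]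
    module_basis.coord_zero[OF basis_at] by simp

lemma icoord_lincomb:
  assumes "finite K" "c \<in> K \<rightarrow> carrier R" "w \<in> K \<rightarrow> carrier (M a)"
  shows "icoord a (lincomb (M a) w c K) i = (\<Oplus>\<^bsub>R\<^esub>k\<in>K. c k \<otimes>\<^bsub>R\<^esub> icoord a (w k) i)"
proof -
  have "\<iota> a (lincomb (M a) w c K) = lincomb (F a) (\<lambda>k. \<iota> a (w k)) c K"
    by (rule lin_map_lincomb[OF persistence_module_module[OF persistence]
          persistence_module_module[OF free_persistence] pmod_hom_lin_map[OF \<iota>_hom] assms])
  moreover have "(\<lambda>k. \<iota> a (w k)) \<in> K \<rightarrow> carrier (F a)"
    using assms(3) pmod_hom_closed[OF \<iota>_hom] by auto
  ultimately show ?thesis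
    using module_basis.coord_lincomb[OF basis_at assms(1,2)] by simp
qed

lemma icoord_diff:
  assumes x: "x \<in> carrier (M a)" and y: "y \<in> carrier (M a)"
  shows "icoord a (x \<ominus>\<^bsub>M a\<^esub> y) i = icoord a x i \<ominus>\<^bsub>R\<^esub> icoord a y i"
proof -
  interpret Ma: module R "M a" by (rule persistence_module_module[OF persistence])
  have "x \<ominus>\<^bsub>M a\<^esub> y = x \<oplus>\<^bsub>M a\<^esub> (\<ominus>\<^bsub>R\<^esub> \<one>\<^bsub>R\<^esub>) \<odot>\<^bsub>M a\<^esub> y"
    using y by (simp add: Ma.minus_eq Ma.smult_l_minus)
  then show ?thesis
    using x y icoord_closed by (simp add: icoord_add icoord_smult Ma.R.minus_eq Ma.R.l_minus)
qed

definition top_degree :: "'p \<Rightarrow> 'm \<Rightarrow> 'p" where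
  "top_degree a z = Sup_fin (fst ` {i. icoord a z i \<noteq> \<zero>\<^bsub>R\<^esub>})"

lemma top_degree:
  assumes z: "z \<in> carrier (M d)" and ne: "{i. icoord d z i \<noteq> \<zero>\<^bsub>R\<^esub>} \<noteq> {}"
  shows top_degree_le: "top_degree d z \<le> d"
    and top_degree_lift: "\<exists>z'\<in>carrier (M (top_degree d z)). z = T (top_degree d z) d z'"
proof -
  let ?m = "top_degree d z"
  have iz: "\<iota> d z \<in> carrier (F d)"
    by (rule pmod_hom_closed[OF \<iota>_hom z])
  show md: "?m \<le> d"
    unfolding top_degree_def by (rule support_top(1)[OF iz ne])
  obtain f where f: "f \<in> carrier (F ?m)" "\<iota> d z = S ?m d f"
    using support_top(2)[OF iz ne] unfolding top_degree_def by blast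
  have "z = \<pi> d (S ?m d f)"
    using retraction[OF z] f(2) by simp
  also have "\<dots> = T ?m d (\<pi> ?m f)"
    by (rule pmod_hom_natural[OF \<pi>_hom md f(1)])
  finally show "\<exists>z'\<in>carrier (M ?m). z = T ?m d z'"
    using pmod_hom_closed[OF \<pi>_hom f(1)] by blast
qed

lemma retract_expansion:
  assumes z: "z \<in> carrier (M m)"
  shows "z = lincomb (M m) (\<lambda>i. T (fst i) m (\<pi> (fst i) (snd i))) (icoord m z) {i. icoord m z i \<noteq> \<zero>\<^bsub>R\<^esub>}"
proof -
  interpret Fm: module_basis R "F m" "translate S m" "{i\<in>B. fst i \<le> m}" by (rule basis_at)
  interpret Mm: module R "M m" by (rule persistence_module_module[OF persistence])
  define K where "K = {i. icoord m z i \<noteq> \<zero>\<^bsub>R\<^esub>}"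
  have iz: "\<iota> m z \<in> carrier (F m)"
    by (rule pmod_hom_closed[OF \<iota>_hom z])
  have K: "finite K" "K \<subseteq> {i\<in>B. fst i \<le> m}" "icoord m z \<in> K \<rightarrow> carrier R"
    unfolding K_def using icoord_support_finite[OF z] icoord_support[OF z] icoord_closed[OF z]
    by blast+
  have tK: "translate S m \<in> K \<rightarrow> carrier (F m)"
    by (rule subsetD[OF Pi_anti_mono[OF K(2)] Fm.basis_closed])
  have "z = \<pi> m (lincomb (F m) (translate S m) (icoord m z) K)"
    using retraction[OF z] Fm.lincomb_coord_support[OF iz] by (simp add: K_def)
  also have "\<dots> = lincomb (M m) (\<lambda>i. \<pi> m (translate S m i)) (icoord m z) K"
    by (rule lin_map_lincomb[OF Fm.module_axioms Mm.module_axioms pmod_hom_lin_map[OF \<pi>_hom] K(1,3) tK])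
  also have "\<dots> = lincomb (M m) (\<lambda>i. T (fst i) m (\<pi> (fst i) (snd i))) (icoord m z) K"
  proof (rule Mm.lincomb_cong[OF refl K(3)])
    have "\<pi> m (translate S m i) = T (fst i) m (\<pi> (fst i) (snd i))"
      and "T (fst i) m (\<pi> (fst i) (snd i)) \<in> carrier (M m)" if "i \<in> K" for i
    proof -
      have i: "fst i \<le> m" "snd i \<in> carrier (F (fst i))"
        using that K(2) basis_homogeneous by auto
      show "\<pi> m (translate S m i) = T (fst i) m (\<pi> (fst i) (snd i))"
        unfolding translate_def by (rule pmod_hom_natural[OF \<pi>_hom i])
      show "T (fst i) m (\<pi> (fst i) (snd i)) \<in> carrier (M m)"
        by (rule persistence_module_closed[OF persistence i(1) pmod_hom_closed[OF \<pi>_hom i(2)]])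
    qed
    then show "(\<lambda>i. T (fst i) m (\<pi> (fst i) (snd i))) \<in> K \<rightarrow> carrier (M m)"
      and "\<And>i. i \<in> K \<Longrightarrow> \<pi> m (translate S m i) = T (fst i) m (\<pi> (fst i) (snd i))"
      by auto
  qed simp
  finally show ?thesis
    unfolding K_def .
qed

definition top_coord :: "'p \<Rightarrow> 'm \<Rightarrow> 'p \<times> 'f \<Rightarrow> 'r" where
  "top_coord a z i = (if fst i = a then icoord a z i else \<zero>\<^bsub>R\<^esub>)"

lemma image_submodule_top_coord: "image_submodule R (top_coord a) (carrier (M a))"
proof -
  interpret Ma: module R "M a" by (rule persistence_module_module[OF persistence])
  have zero: "top_coord a \<zero>\<^bsub>M a\<^esub> i = \<zero>\<^bsub>R\<^esub>" for i
    using lin_map_zero[OF Ma.module_axioms persistence_module_module[OF free_persistence]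
        pmod_hom_lin_map[OF \<iota>_hom]] module_basis.coord_zero[OF basis_at]
    by (simp add: top_coord_def)
  show ?thesis
    unfolding image_submodule_def
  proof (intro conjI ballI allI)
    show "top_coord a x i \<in> carrier R" if "x \<in> carrier (M a)" for x i
      using that icoord_closed by (simp add: top_coord_def)
    show "\<exists>z\<in>carrier (M a). \<forall>i. top_coord a z i = \<zero>\<^bsub>R\<^esub>"
      using zero Ma.M.zero_closed by blast
    show "\<exists>z\<in>carrier (M a). \<forall>i. top_coord a z i = top_coord a x i \<oplus>\<^bsub>R\<^esub> top_coord a y i"
      if "x \<in> carrier (M a)" "y \<in> carrier (M a)" for x y
      using that by (intro bexI[of _ "x \<oplus>\<^bsub>M a\<^esub> y"]) (simp_all add: top_coord_def icoord_add)
    show "\<exists>z\<in>carrier (M a). \<forall>i. top_coord a z i = r \<otimes>\<^bsub>R\<^esub> top_coord a x i"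
      if "r \<in> carrier R" "x \<in> carrier (M a)" for r x
      using that by (intro bexI[of _ "r \<odot>\<^bsub>M a\<^esub> x"]) (simp_all add: top_coord_def icoord_smult)
  qed
qed

end

lemma card_lower_set_less:
  fixes A D :: "'p::lattice set"
  assumes "finite D" "finite A" "A \<noteq> {}" "A \<subseteq> D" "\<mu> < Sup_fin A"
  shows "card {s\<in>D. s \<le> \<mu>} < card {s\<in>D. s \<le> Sup_fin A}"
proof (rule psubset_card_mono)
  show "finite {s\<in>D. s \<le> Sup_fin A}"
    using assms(1) by simp
  obtain s where s: "s \<in> A" "\<not> s \<le> \<mu>"
    using Sup_fin.boundedI[OF assms(2,3)] assms(5) by force
  then have "s \<in> {s\<in>D. s \<le> Sup_fin A} - {s\<in>D. s \<le> \<mu>}"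
    using assms(4) Sup_fin.coboundedI[OF assms(2)] by auto
  then show "{s\<in>D. s \<le> \<mu>} \<subset> {s\<in>D. s \<le> Sup_fin A}"
    using assms(5) by auto
qed

locale graded_retract_pid = graded_retract R F S B M T \<iota> \<pi>
  for R :: "('r, 'c) ring_scheme"
    and F :: "'p::lattice \<Rightarrow> ('r, 'f) module"
    and S :: "'p \<Rightarrow> 'p \<Rightarrow> 'f \<Rightarrow> 'f"
    and B :: "('p \<times> 'f) set"
    and M :: "'p \<Rightarrow> ('r, 'm) module"
    and T :: "'p \<Rightarrow> 'p \<Rightarrow> 'm \<Rightarrow> 'm"
    and \<iota> :: "'p \<Rightarrow> 'm \<Rightarrow> 'f"
    and \<pi> :: "'p \<Rightarrow> 'f \<Rightarrow> 'm" +
  assumes pid: "principal_domain R"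
    and fin_gen: "\<And>a. fin_gen R (M a)"
begin

definition support_bound :: "'p \<Rightarrow> ('p \<times> 'f) set" where
  "support_bound a = (SOME I. finite I \<and> (\<forall>z\<in>carrier (M a). \<forall>i. icoord a z i \<noteq> \<zero>\<^bsub>R\<^esub> \<longrightarrow> i \<in> I))"

lemma support_bound_spec:
  "finite (support_bound a) \<and> (\<forall>z\<in>carrier (M a). \<forall>i. icoord a z i \<noteq> \<zero>\<^bsub>R\<^esub> \<longrightarrow> i \<in> support_bound a)"
  unfolding support_bound_def
  by (rule someI_ex[OF fin_gen_coord_support[OF basis_at persistence_module_module[OF persistence]
          fin_gen pmod_hom_lin_map[OF \<iota>_hom]]])

lemma support_bound_finite: "finite (support_bound a)"
  using support_bound_spec by blast

lemma support_boundI: "z \<in> carrier (M a) \<Longrightarrow> icoord a z i \<noteq> \<zero>\<^bsub>R\<^esub> \<Longrightarrow> i \<in> support_bound a"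
  using support_bound_spec by blast

lemma support_bound_mono:
  assumes "d \<le> b" "z \<in> carrier (M d)" "icoord d z i \<noteq> \<zero>\<^bsub>R\<^esub>"
  shows "i \<in> support_bound b"
proof (rule support_boundI)
  show "T d b z \<in> carrier (M b)"
    by (rule persistence_module_closed[OF persistence assms(1,2)])
  show "icoord b (T d b z) i \<noteq> \<zero>\<^bsub>R\<^esub>"
    using assms by (simp add: icoord_translate)
qed

definition gens :: "'p \<Rightarrow> 'm set" where
  "gens a = (SOME G. finite G \<and> G \<subseteq> carrier (M a) \<and>
     image_spans R (top_coord a) G (carrier (M a)) \<and> image_independent R (top_coord a) G)"

lemma gens_spec:
  "finite (gens a) \<and> gens a \<subseteq> carrier (M a) \<and>
     image_spans R (top_coord a) (gens a) (carrier (M a)) \<and> image_independent R (top_coord a) (gens a)"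
proof -
  have fin: "finite {i\<in>support_bound a. fst i = a}"
    using support_bound_finite by simp
  have "\<forall>z\<in>carrier (M a). \<forall>i. i \<notin> {i\<in>support_bound a. fst i = a} \<longrightarrow> top_coord a z i = \<zero>\<^bsub>R\<^esub>"
    using support_boundI by (auto simp: top_coord_def)
  then have "\<exists>G. finite G \<and> G \<subseteq> carrier (M a) \<and>
      image_spans R (top_coord a) G (carrier (M a)) \<and> image_independent R (top_coord a) G"
    by (rule principal_domain.image_submodule_basis[OF pid fin image_submodule_top_coord])
  then show ?thesis
    unfolding gens_def by (rule someI_ex)
qed

lemma gens:
  shows gens_finite: "finite (gens a)"
    and gens_closed: "gens a \<subseteq> carrier (M a)"
    and gens_spans: "image_spans R (top_coord a) (gens a) (carrier (M a))"
    and gens_independent: "image_independent R (top_coord a) (gens a)"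
  using gens_spec by blast+

definition generators :: "('p \<times> 'm) set" where
  "generators = {(a, g). g \<in> gens a}"

abbreviation gen_span :: "'p \<Rightarrow> 'm set" where
  "gen_span d \<equiv> lin_span R (M d) (translate T d) {k\<in>generators. fst k \<le> d}"

lemma generators_homogeneous: "generators \<subseteq> {(a, x). x \<in> carrier (M a)}"
  using gens_closed unfolding generators_def by blast

lemma top_decomposition:
  assumes z: "z \<in> carrier (M m)"
  obtains c K r where "c \<in> gens m \<rightarrow> carrier R" "finite K" "K \<subseteq> B" "\<forall>i\<in>K. fst i < m"
    "r \<in> K \<rightarrow> carrier R"
    "z = lincomb (M m) (\<lambda>x. x) c (gens m) \<oplus>\<^bsub>M m\<^esub> lincomb (M m) (\<lambda>i. T (fst i) m (\<pi> (fst i) (snd i))) r K"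
proof -
  interpret Mm: module R "M m" by (rule persistence_module_module[OF persistence])
  obtain c where c: "c \<in> gens m \<rightarrow> carrier R"
    and top: "\<forall>i. top_coord m z i = (\<Oplus>\<^bsub>R\<^esub>g\<in>gens m. c g \<otimes>\<^bsub>R\<^esub> top_coord m g i)"
    using gens_spans z unfolding image_spans_def by blast
  define g where "g = lincomb (M m) (\<lambda>x. x) c (gens m)"
  define \<rho> where "\<rho> = z \<ominus>\<^bsub>M m\<^esub> g"
  have id_closed: "(\<lambda>x. x) \<in> gens m \<rightarrow> carrier (M m)"
    using gens_closed by auto
  have g: "g \<in> carrier (M m)"
    unfolding g_def using c id_closed by simp
  have \<rho>: "\<rho> \<in> carrier (M m)"
    unfolding \<rho>_def using z g by simp
  have top_zero: "icoord m \<rho> i = \<zero>\<^bsub>R\<^esub>" if "fst i = m" for i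
  proof -
    have "icoord m g i = (\<Oplus>\<^bsub>R\<^esub>x\<in>gens m. c x \<otimes>\<^bsub>R\<^esub> icoord m x i)"
      unfolding g_def by (rule icoord_lincomb[OF gens_finite c id_closed])
    also have "\<dots> = (\<Oplus>\<^bsub>R\<^esub>x\<in>gens m. c x \<otimes>\<^bsub>R\<^esub> top_coord m x i)"
      using that by (simp add: top_coord_def)
    also have "\<dots> = icoord m z i"
      using spec[OF top, of i] that by (simp add: top_coord_def)
    finally show ?thesis
      unfolding \<rho>_def using z g icoord_closed by (simp add: icoord_diff Mm.R.r_neg Mm.R.minus_eq)
  qed
  define K where "K = {i. icoord m \<rho> i \<noteq> \<zero>\<^bsub>R\<^esub>}"
  have K_below: "i \<in> B \<and> fst i < m" if "i \<in> K" for i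
  proof -
    have nz: "icoord m \<rho> i \<noteq> \<zero>\<^bsub>R\<^esub>"
      using that by (simp add: K_def)
    then have "i \<in> B \<and> fst i \<le> m"
      by (rule icoord_support[OF \<rho>])
    moreover have "fst i \<noteq> m"
      using top_zero nz by blast
    ultimately show ?thesis
      by (simp add: less_le)
  qed
  have "finite K"
    unfolding K_def by (rule icoord_support_finite[OF \<rho>])
  moreover have "K \<subseteq> B" "\<forall>i\<in>K. fst i < m"
    using K_below by blast+
  moreover have "icoord m \<rho> \<in> K \<rightarrow> carrier R"
    using icoord_closed[OF \<rho>] by blast
  moreover have "z = g \<oplus>\<^bsub>M m\<^esub> lincomb (M m) (\<lambda>i. T (fst i) m (\<pi> (fst i) (snd i))) (icoord m \<rho>) K"
  proof -
    have "z = g \<oplus>\<^bsub>M m\<^esub> \<rho>"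
      unfolding \<rho>_def using z g by (simp add: Mm.M.minus_eq Mm.M.a_lcomm[of g] Mm.M.r_neg)
    also have "\<rho> = lincomb (M m) (\<lambda>i. T (fst i) m (\<pi> (fst i) (snd i))) (icoord m \<rho>) K"
      unfolding K_def by (rule retract_expansion[OF \<rho>])
    finally show ?thesis .
  qed
  ultimately show ?thesis
    using that c unfolding g_def by blast
qed

lemma zero_in_gen_span: "\<zero>\<^bsub>M a\<^esub> \<in> gen_span a"
  by (rule module.zero_in_lin_span[OF persistence_module_module[OF persistence]])

lemma lincomb_gens_in_gen_span:
  assumes c: "c \<in> gens m \<rightarrow> carrier R"
  shows "lincomb (M m) (\<lambda>x. x) c (gens m) \<in> gen_span m"
proof (rule module.lin_span_lincomb[OF persistence_module_module[OF persistence]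
      translate_closed[OF persistence generators_homogeneous] gens_finite c])
  show "(\<lambda>x. x) \<in> gens m \<rightarrow> gen_span m"
  proof
    fix x assume x: "x \<in> gens m"
    then have "translate T m (m, x) \<in> gen_span m"
      using gens_closed translate_closed[OF persistence generators_homogeneous, of m]
      by (intro module.generator_in_lin_span[OF persistence_module_module[OF persistence]])
        (auto simp: generators_def)
    moreover have "x \<in> carrier (M m)"
      using x gens_closed by blast
    ultimately show "x \<in> gen_span m"
      using persistence_module_id[OF persistence] by (simp add: translate_def)
  qed
qed

lemma span_from_lower:
  assumes z: "z \<in> carrier (M m)"
    and lower: "\<And>i. i \<in> B \<Longrightarrow> fst i < m \<Longrightarrow> \<pi> (fst i) (snd i) \<in> gen_span (fst i)"
  shows "z \<in> gen_span m"
proof -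
  interpret Mm: module R "M m" by (rule persistence_module_module[OF persistence])
  have closed: "translate T m \<in> {k\<in>generators. fst k \<le> m} \<rightarrow> carrier (M m)"
    by (rule translate_closed[OF persistence generators_homogeneous])
  obtain c K r where c: "c \<in> gens m \<rightarrow> carrier R" and K: "finite K" "K \<subseteq> B" "\<forall>i\<in>K. fst i < m"
    and r: "r \<in> K \<rightarrow> carrier R"
    and z_eq: "z = lincomb (M m) (\<lambda>x. x) c (gens m) \<oplus>\<^bsub>M m\<^esub>
      lincomb (M m) (\<lambda>i. T (fst i) m (\<pi> (fst i) (snd i))) r K"
    using top_decomposition[OF z] by blast
  have "T (fst i) m (\<pi> (fst i) (snd i)) \<in> gen_span m" if "i \<in> K" for i
    using that K by (intro lin_span_translate[OF persistence generators_homogeneous _ lower]) auto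
  then have "lincomb (M m) (\<lambda>i. T (fst i) m (\<pi> (fst i) (snd i))) r K \<in> gen_span m"
    by (intro Mm.lin_span_lincomb[OF closed K(1) r]) blast
  then show ?thesis
    unfolding z_eq by (intro Mm.lin_span_add[OF closed] lincomb_gens_in_gen_span c)
qed

theorem generators_span:
  assumes z: "z \<in> carrier (M d)"
  shows "z \<in> gen_span d"
proof -
  define D where "D = fst ` support_bound d"
  have D: "finite D"
    unfolding D_def using support_bound_finite by simp
  have nonzero_case: "y \<in> gen_span a"
    if "a \<le> d" "y \<in> carrier (M a)" "{i. icoord a y i \<noteq> \<zero>\<^bsub>R\<^esub>} \<noteq> {}" for a y
    using that
  proof (induction "card {s\<in>D. s \<le> top_degree a y}" arbitrary: a y rule: less_induct)
    case less
    let ?A = "fst ` {i. icoord a y i \<noteq> \<zero>\<^bsub>R\<^esub>}"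
    let ?m = "top_degree a y"
    have A: "finite ?A" "?A \<noteq> {}" "?A \<subseteq> D"
      using icoord_support_finite[OF less.prems(2)] less.prems(3)
        support_bound_mono[OF less.prems(1,2)] by (auto simp: D_def)
    have m: "?m \<le> a"
      by (rule top_degree_le[OF less.prems(2,3)])
    obtain y' where y': "y' \<in> carrier (M ?m)" "y = T ?m a y'"
      using top_degree_lift[OF less.prems(2,3)] by blast
    have "y' \<in> gen_span ?m"
    proof (rule span_from_lower[OF y'(1)])
      fix i assume i: "i \<in> B" "fst i < ?m"
      let ?x = "\<pi> (fst i) (snd i)"
      have x: "?x \<in> carrier (M (fst i))"
        using pmod_hom_closed[OF \<pi>_hom] basis_homogeneous i(1) by auto
      show "?x \<in> gen_span (fst i)"
      proof (cases "{j. icoord (fst i) ?x j \<noteq> \<zero>\<^bsub>R\<^esub>} = {}")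
        case True
        then have "?x = \<zero>\<^bsub>M (fst i)\<^esub>"
          by (intro icoord_eq_zero_imp_zero[OF x]) blast
        then show ?thesis
          using zero_in_gen_span by simp
      next
        case False
        have "top_degree (fst i) ?x < Sup_fin ?A"
          using top_degree_le[OF x False] i(2) unfolding top_degree_def by simp
        then have "card {s\<in>D. s \<le> top_degree (fst i) ?x} < card {s\<in>D. s \<le> ?m}"
          unfolding top_degree_def[of a y] by (rule card_lower_set_less[OF D A(1-3)])
        moreover have "fst i \<le> d"
          using i(2) m less.prems(1) by simp
        ultimately show ?thesis
          using less.hyps x False by blast
      qed
    qed
    then have "T ?m a y' \<in> gen_span a"
      by (rule lin_span_translate[OF persistence generators_homogeneous m])
    then show ?case
      by (subst y'(2))
  qed
  show ?thesis
  proof (cases "{i. icoord d z i \<noteq> \<zero>\<^bsub>R\<^esub>} = {}")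
    case True
    then have "z = \<zero>\<^bsub>M d\<^esub>"
      by (intro icoord_eq_zero_imp_zero[OF z]) blast
    then show ?thesis
      using zero_in_gen_span by simp
  qed (rule nonzero_case[OF order_refl z])
qed

lemma icoord_lincomb_translate:
  assumes K: "finite K" "K \<subseteq> {k\<in>generators. fst k \<le> b}" "c \<in> K \<rightarrow> carrier R"
  shows "icoord b (lincomb (M b) (translate T b) c K) i = (\<Oplus>\<^bsub>R\<^esub>k\<in>K. c k \<otimes>\<^bsub>R\<^esub> icoord (fst k) (snd k) i)"
proof -
  interpret R: ring R
    using persistence_module_module[OF persistence] by (simp add: module_def cring.axioms(1))
  have closed: "translate T b \<in> K \<rightarrow> carrier (M b)"
    by (rule subsetD[OF Pi_anti_mono[OF K(2)] translate_closed[OF persistence generators_homogeneous]])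
  have "icoord b (lincomb (M b) (translate T b) c K) i = (\<Oplus>\<^bsub>R\<^esub>k\<in>K. c k \<otimes>\<^bsub>R\<^esub> icoord b (translate T b k) i)"
    by (rule icoord_lincomb[OF K(1,3) closed])
  also have "\<dots> = (\<Oplus>\<^bsub>R\<^esub>k\<in>K. c k \<otimes>\<^bsub>R\<^esub> icoord (fst k) (snd k) i)"
  proof (rule R.finsum_cong')
    have k: "fst k \<le> b" "snd k \<in> carrier (M (fst k))" if "k \<in> K" for k
      using that K(2) generators_homogeneous by auto
    then show "c k \<otimes>\<^bsub>R\<^esub> icoord b (translate T b k) i = c k \<otimes>\<^bsub>R\<^esub> icoord (fst k) (snd k) i" if "k \<in> K" for k
      using that by (simp add: translate_def icoord_translate)
    show "(\<lambda>k. c k \<otimes>\<^bsub>R\<^esub> icoord (fst k) (snd k) i) \<in> K \<rightarrow> carrier R"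
    proof
      fix k assume "k \<in> K"
      then show "c k \<otimes>\<^bsub>R\<^esub> icoord (fst k) (snd k) i \<in> carrier R"
        using K(3) icoord_closed[OF k(2)] by (intro R.m_closed) auto
    qed
  qed simp
  finally show ?thesis .
qed

lemma top_relation:
  assumes K: "finite K" "K \<subseteq> {k\<in>generators. fst k \<le> b}" "c \<in> K \<rightarrow> carrier R"
    and rel: "lincomb (M b) (translate T b) c K = \<zero>\<^bsub>M b\<^esub>"
    and maximal: "\<And>k. k \<in> K \<Longrightarrow> c k \<noteq> \<zero>\<^bsub>R\<^esub> \<Longrightarrow> a0 \<le> fst k \<Longrightarrow> fst k = a0"
  shows "(\<Oplus>\<^bsub>R\<^esub>k\<in>{k\<in>K. fst k = a0}. c k \<otimes>\<^bsub>R\<^esub> top_coord a0 (snd k) i) = \<zero>\<^bsub>R\<^esub>"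
proof -
  interpret R: ring R
    using persistence_module_module[OF persistence] by (simp add: module_def cring.axioms(1))
  have k: "snd k \<in> carrier (M (fst k))" if "k \<in> K" for k
    using that K(2) generators_homogeneous by auto
  have term_closed: "c k \<otimes>\<^bsub>R\<^esub> icoord (fst k) (snd k) i \<in> carrier R" if "k \<in> K" for k
    using that K(3) icoord_closed[OF k] by (intro R.m_closed) auto
  show ?thesis
  proof (cases "fst i = a0")
    case False
    have "(\<Oplus>\<^bsub>R\<^esub>k\<in>{k\<in>K. fst k = a0}. c k \<otimes>\<^bsub>R\<^esub> top_coord a0 (snd k) i) =
        (\<Oplus>\<^bsub>R\<^esub>k\<in>{k\<in>K. fst k = a0}. \<zero>\<^bsub>R\<^esub>)"
      by (rule R.finsum_cong') (use False K(3) in \<open>auto simp: top_coord_def Pi_iff\<close>)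
    then show ?thesis
      by simp
  next
    case True
    have vanish: "c k \<otimes>\<^bsub>R\<^esub> icoord (fst k) (snd k) i = \<zero>\<^bsub>R\<^esub>" if "k \<in> K" "fst k \<noteq> a0" for k
    proof -
      have "icoord (fst k) (snd k) i = \<zero>\<^bsub>R\<^esub> \<or> c k = \<zero>\<^bsub>R\<^esub>"
      proof (rule disjCI)
        assume "c k \<noteq> \<zero>\<^bsub>R\<^esub>"
        then have "\<not> a0 \<le> fst k"
          using maximal[OF that(1)] that(2) by blast
        then show "icoord (fst k) (snd k) i = \<zero>\<^bsub>R\<^esub>"
          using icoord_support[OF k[OF that(1)], of i] True by blast
      qed
      then show ?thesis
        using K(3) that(1) icoord_closed[OF k[OF that(1)], of i] by (auto simp: Pi_iff)
    qed
    have "\<zero>\<^bsub>R\<^esub> = (\<Oplus>\<^bsub>R\<^esub>k\<in>K. c k \<otimes>\<^bsub>R\<^esub> icoord (fst k) (snd k) i)"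
      using icoord_lincomb_translate[OF K] rel icoord_zero by simp
    also have "\<dots> = (\<Oplus>\<^bsub>R\<^esub>k\<in>{k\<in>K. fst k = a0}. c k \<otimes>\<^bsub>R\<^esub> icoord (fst k) (snd k) i)"
      by (rule R.add.finprod_mono_neutral_cong_right[OF K(1)]) (use vanish term_closed in auto)
    also have "\<dots> = (\<Oplus>\<^bsub>R\<^esub>k\<in>{k\<in>K. fst k = a0}. c k \<otimes>\<^bsub>R\<^esub> top_coord a0 (snd k) i)"
    proof (rule R.finsum_cong'[OF refl])
      show eq: "c k \<otimes>\<^bsub>R\<^esub> icoord (fst k) (snd k) i = c k \<otimes>\<^bsub>R\<^esub> top_coord a0 (snd k) i"
        if "k \<in> {k\<in>K. fst k = a0}" for k
        using that True by (simp add: top_coord_def)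
      show "(\<lambda>k. c k \<otimes>\<^bsub>R\<^esub> top_coord a0 (snd k) i) \<in> {k\<in>K. fst k = a0} \<rightarrow> carrier R"
      proof
        fix k assume "k \<in> {k\<in>K. fst k = a0}"
        then show "c k \<otimes>\<^bsub>R\<^esub> top_coord a0 (snd k) i \<in> carrier R"
          using term_closed[of k] eq[of k] by simp
      qed
    qed
    finally show ?thesis
      by simp
  qed
qed

theorem generators_independent:
  assumes K: "finite K" "K \<subseteq> {k\<in>generators. fst k \<le> b}" "c \<in> K \<rightarrow> carrier R"
    and rel: "lincomb (M b) (translate T b) c K = \<zero>\<^bsub>M b\<^esub>"
  shows "\<forall>k\<in>K. c k = \<zero>\<^bsub>R\<^esub>"
proof (rule ccontr)
  interpret R: principal_domain R by (rule pid)
  assume "\<not> (\<forall>k\<in>K. c k = \<zero>\<^bsub>R\<^esub>)"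
  then have "fst ` {k\<in>K. c k \<noteq> \<zero>\<^bsub>R\<^esub>} \<noteq> {}"
    by blast
  with K(1) have "\<exists>a0\<in>fst ` {k\<in>K. c k \<noteq> \<zero>\<^bsub>R\<^esub>}. \<forall>a\<in>fst ` {k\<in>K. c k \<noteq> \<zero>\<^bsub>R\<^esub>}. a0 \<le> a \<longrightarrow> a0 = a"
    by (intro finite_has_maximal) auto
  then obtain a0 where a0: "a0 \<in> fst ` {k\<in>K. c k \<noteq> \<zero>\<^bsub>R\<^esub>}"
    and maximal: "\<And>a. a \<in> fst ` {k\<in>K. c k \<noteq> \<zero>\<^bsub>R\<^esub>} \<Longrightarrow> a0 \<le> a \<Longrightarrow> a0 = a"
    by blast
  define G0 where "G0 = snd ` {k\<in>K. fst k = a0}"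
  have K0: "{k\<in>K. fst k = a0} = (\<lambda>g. (a0, g)) ` G0"
    unfolding G0_def by force
  have G0: "G0 \<subseteq> gens a0"
    using K(2) unfolding G0_def generators_def by auto
  have top_closed: "top_coord a0 g i \<in> carrier R" if "g \<in> gens a0" for g i
  proof -
    have "g \<in> carrier (M a0)"
      using that gens_closed by blast
    then show ?thesis
      by (simp add: top_coord_def icoord_closed)
  qed
  have indep: "image_independent R (top_coord a0) G0"
    by (rule R.image_independent_subset[OF gens_independent gens_finite G0 top_closed])
  have c0: "(\<lambda>g. c (a0, g)) \<in> G0 \<rightarrow> carrier R"
    using K(3) K0 by auto
  have rel0: "(\<Oplus>\<^bsub>R\<^esub>g\<in>G0. c (a0, g) \<otimes>\<^bsub>R\<^esub> top_coord a0 g i) = \<zero>\<^bsub>R\<^esub>" for i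
  proof -
    have closed: "(\<lambda>k. c k \<otimes>\<^bsub>R\<^esub> top_coord a0 (snd k) i) \<in> (\<lambda>g. (a0, g)) ` G0 \<rightarrow> carrier R"
    proof
      fix k assume "k \<in> (\<lambda>g. (a0, g)) ` G0"
      then obtain g where g: "g \<in> G0" "k = (a0, g)"
        by blast
      then have "c k \<in> carrier R"
        using K(3) K0 by blast
      moreover have "top_coord a0 (snd k) i \<in> carrier R"
        using top_closed[of g i] G0 g by auto
      ultimately show "c k \<otimes>\<^bsub>R\<^esub> top_coord a0 (snd k) i \<in> carrier R"
        by simp
    qed
    have "(\<Oplus>\<^bsub>R\<^esub>g\<in>G0. c (a0, g) \<otimes>\<^bsub>R\<^esub> top_coord a0 g i) =
        (\<Oplus>\<^bsub>R\<^esub>k\<in>{k\<in>K. fst k = a0}. c k \<otimes>\<^bsub>R\<^esub> top_coord a0 (snd k) i)"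
      unfolding K0 by (simp add: R.finsum_reindex[OF closed] inj_on_def)
    also have "\<dots> = \<zero>\<^bsub>R\<^esub>"
      using maximal by (intro top_relation[OF K rel]) blast
    finally show ?thesis .
  qed
  have "\<forall>g\<in>G0. c (a0, g) = \<zero>\<^bsub>R\<^esub>"
    using indep[unfolded image_independent_def, rule_format, OF c0] rel0 by simp
  moreover obtain k where "k \<in> K" "c k \<noteq> \<zero>\<^bsub>R\<^esub>" "fst k = a0"
    using a0 by blast
  moreover from this have "snd k \<in> G0"
    unfolding G0_def by blast
  ultimately show False
    by (metis prod.collapse)
qed

theorem generators_graded_basis: "graded_basis R M T generators"
  unfolding graded_basis_def
proof (intro conjI allI generators_homogeneous)
  fix b
  interpret Mb: module R "M b" by (rule persistence_module_module[OF persistence])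
  show "module_basis R (M b) (translate T b) {k\<in>generators. fst k \<le> b}"
  proof
    show "translate T b \<in> {k\<in>generators. fst k \<le> b} \<rightarrow> carrier (M b)"
      by (rule translate_closed[OF persistence generators_homogeneous])
    show "carrier (M b) \<subseteq> gen_span b"
      using generators_span by blast
  qed (rule generators_independent)
qed

end

lemma graded_projective_imp_graded_free:
  fixes R :: "('r, 'c) ring_scheme" and M :: "'p::lattice_ab_group_add \<Rightarrow> ('r, 'm) module"
  assumes pid: "principal_domain R" and pm: "persistence_module R M T"
    and fg: "\<forall>a. fin_gen R (M a)" and proj: "graded_projective TYPE('f) R M T"
  shows "graded_free R M T"
proof -
  obtain F :: "'p \<Rightarrow> ('r, 'f) module" and S \<iota> \<pi> where F: "persistence_module R F S" "graded_free R F S"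
    and hom: "pmod_hom R M T F S \<iota>" "pmod_hom R F S M T \<pi>"
    and retraction: "\<forall>a. \<forall>x\<in>carrier (M a). \<pi> a (\<iota> a x) = x"
    using proj unfolding graded_projective_def by blast
  obtain B where "graded_basis R F S B"
    using F graded_free_iff_graded_basis by blast
  then interpret graded_retract_pid R F S B M T \<iota> \<pi>
    using F(1) pm hom retraction pid fg
    by (intro graded_retract_pid.intro graded_retract.intro graded_free_module.intro
        graded_retract_axioms.intro graded_retract_pid_axioms.intro) auto
  show ?thesis
    using generators_graded_basis graded_free_iff_graded_basis[OF pm] by blast
qed

definition transport_module :: "('m \<Rightarrow> 'f) \<Rightarrow> ('r, 'm) module \<Rightarrow> ('r, 'f) module" where
  "transport_module j N =
     \<lparr>carrier = j ` carrier N, mult = (\<lambda>x y. x), one = j \<one>\<^bsub>N\<^esub>, zero = j \<zero>\<^bsub>N\<^esub>,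
      add = (\<lambda>x y. j (inv_into UNIV j x \<oplus>\<^bsub>N\<^esub> inv_into UNIV j y)), smult = (\<lambda>r x. j (r \<odot>\<^bsub>N\<^esub> inv_into UNIV j x))\<rparr>"

lemma transport_module_simps:
  "carrier (transport_module j N) = j ` carrier N"
  "\<zero>\<^bsub>transport_module j N\<^esub> = j \<zero>\<^bsub>N\<^esub>"
  "x \<oplus>\<^bsub>transport_module j N\<^esub> y = j (inv_into UNIV j x \<oplus>\<^bsub>N\<^esub> inv_into UNIV j y)"
  "r \<odot>\<^bsub>transport_module j N\<^esub> x = j (r \<odot>\<^bsub>N\<^esub> inv_into UNIV j x)"
  unfolding transport_module_def by simp_all

lemma transport_module:
  assumes j: "inj j" and N: "module R N"
  shows "module R (transport_module j N)"
proof -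
  interpret N: module R N by (rule N)
  let ?N = "transport_module j N"
  have inv_j [simp]: "inv_into UNIV j (j x) = x" for x
    using j by simp
  have carrier: "carrier ?N = j ` carrier N"
    by (rule transport_module_simps)
  have "abelian_group ?N"
  proof (rule abelian_groupI)
    show "\<zero>\<^bsub>?N\<^esub> \<in> carrier ?N"
      by (simp add: transport_module_simps)
    show "x \<oplus>\<^bsub>?N\<^esub> y \<in> carrier ?N" "x \<oplus>\<^bsub>?N\<^esub> y = y \<oplus>\<^bsub>?N\<^esub> x"
      if "x \<in> carrier ?N" "y \<in> carrier ?N" for x y
      using that unfolding carrier by (auto simp: transport_module_simps N.M.a_comm)
    show "x \<oplus>\<^bsub>?N\<^esub> y \<oplus>\<^bsub>?N\<^esub> z = x \<oplus>\<^bsub>?N\<^esub> (y \<oplus>\<^bsub>?N\<^esub> z)"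
      if "x \<in> carrier ?N" "y \<in> carrier ?N" "z \<in> carrier ?N" for x y z
      using that unfolding carrier by (auto simp: transport_module_simps N.M.a_assoc)
    show "\<zero>\<^bsub>?N\<^esub> \<oplus>\<^bsub>?N\<^esub> x = x" "\<exists>y\<in>carrier ?N. y \<oplus>\<^bsub>?N\<^esub> x = \<zero>\<^bsub>?N\<^esub>"
      if x: "x \<in> carrier ?N" for x
    proof -
      obtain u where "u \<in> carrier N" "x = j u"
        using x unfolding carrier by blast
      then show "\<zero>\<^bsub>?N\<^esub> \<oplus>\<^bsub>?N\<^esub> x = x" "\<exists>y\<in>carrier ?N. y \<oplus>\<^bsub>?N\<^esub> x = \<zero>\<^bsub>?N\<^esub>"
        unfolding carrier transport_module_simps
        by (simp, intro bexI[of _ "j (\<ominus>\<^bsub>N\<^esub> u)"]) (simp_all add: N.M.l_neg)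
    qed
  qed
  then show ?thesis
  proof (rule moduleI[OF N.is_cring])
    show "a \<odot>\<^bsub>?N\<^esub> x \<in> carrier ?N" if "a \<in> carrier R" "x \<in> carrier ?N" for a x
      using that unfolding carrier by (auto simp: transport_module_simps)
    show "(a \<oplus>\<^bsub>R\<^esub> b) \<odot>\<^bsub>?N\<^esub> x = a \<odot>\<^bsub>?N\<^esub> x \<oplus>\<^bsub>?N\<^esub> b \<odot>\<^bsub>?N\<^esub> x"
      "(a \<otimes>\<^bsub>R\<^esub> b) \<odot>\<^bsub>?N\<^esub> x = a \<odot>\<^bsub>?N\<^esub> (b \<odot>\<^bsub>?N\<^esub> x)"
      if "a \<in> carrier R" "b \<in> carrier R" "x \<in> carrier ?N" for a b x
      using that unfolding carrier by (auto simp: transport_module_simps N.smult_l_distr N.smult_assoc1)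
    show "a \<odot>\<^bsub>?N\<^esub> (x \<oplus>\<^bsub>?N\<^esub> y) = a \<odot>\<^bsub>?N\<^esub> x \<oplus>\<^bsub>?N\<^esub> a \<odot>\<^bsub>?N\<^esub> y"
      if "a \<in> carrier R" "x \<in> carrier ?N" "y \<in> carrier ?N" for a x y
      using that unfolding carrier by (auto simp: transport_module_simps N.smult_r_distr)
    show "\<one>\<^bsub>R\<^esub> \<odot>\<^bsub>?N\<^esub> x = x" if "x \<in> carrier ?N" for x
      using that unfolding carrier by (auto simp: transport_module_simps)
  qed
qed

lemma transport_persistence_module:
  assumes j: "inj j" and pm: "persistence_module R M T"
  defines "F \<equiv> \<lambda>a. transport_module j (M a)"
    and "S \<equiv> \<lambda>a b y. j (T a b (inv_into UNIV j y))"
  shows "persistence_module R F S"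
    and "pmod_hom R M T F S (\<lambda>a. j)"
    and "pmod_hom R F S M T (\<lambda>a. inv_into UNIV j)"
proof -
  have inv_j [simp]: "inv_into UNIV j (j x) = x" for x
    using j by simp
  note simps = F_def S_def transport_module_simps lin_map_def
  have T: "a \<le> b \<Longrightarrow> lin_map R (M a) (M b) (T a b)" for a b
    by (rule persistence_module_lin_map[OF pm])
  show "persistence_module R F S"
    unfolding persistence_module_def
  proof (intro conjI allI impI ballI)
    show "module R (F a)" for a
      unfolding F_def by (rule transport_module[OF j persistence_module_module[OF pm]])
    show "lin_map R (F a) (F b) (S a b)" if "a \<le> b" for a b
      using T[OF that] by (auto simp: simps)
    show "S a a x = x" if "x \<in> carrier (F a)" for a x
      using that persistence_module_id[OF pm] by (auto simp: simps)
    show "S b c (S a b x) = S a c x" if "a \<le> b" "b \<le> c" "x \<in> carrier (F a)" for a b c x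
      using that persistence_module_comp[OF pm] by (auto simp: simps)
  qed
  show "pmod_hom R M T F S (\<lambda>a. j)"
    unfolding pmod_hom_def by (auto simp: simps)
  show "pmod_hom R F S M T (\<lambda>a. inv_into UNIV j)"
    unfolding pmod_hom_def by (auto simp: simps)
qed

lemma inj_indicator:
  fixes g :: "('a \<times> 'b \<Rightarrow> 'c) \<Rightarrow> 'd"
  assumes "inj g" "u \<noteq> v"
  shows "inj (\<lambda>x. g (\<lambda>q. if snd q = x then u else v))"
proof (rule injI)
  fix x y assume "g (\<lambda>q. if snd q = x then u else v) = g (\<lambda>q. if snd q = y then u else v)"
  then have "(\<lambda>q :: 'a \<times> 'b. if snd q = x then u else v) = (\<lambda>q. if snd q = y then u else v)"
    using assms(1) by (simp add: inj_eq)
  from fun_cong[OF this, of "(undefined, x)"] have "(if x = x then u else v) = (if x = y then u else v)"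
    by simp
  then show "x = y"
    using assms(2) by (simp split: if_splits)
qed

lemma graded_free_imp_graded_projective:
  fixes R :: "('r, 'c) ring_scheme" and M :: "'p::lattice_ab_group_add \<Rightarrow> ('r, 'm) module"
  assumes nontrivial: "\<one>\<^bsub>R\<^esub> \<noteq> \<zero>\<^bsub>R\<^esub>" and pm: "persistence_module R M T"
    and "\<exists>g :: ('p \<times> 'm \<Rightarrow> 'r) \<Rightarrow> 'f. inj g" and free: "graded_free R M T"
  shows "graded_projective TYPE('f) R M T"
proof -
  obtain g :: "('p \<times> 'm \<Rightarrow> 'r) \<Rightarrow> 'f" where "inj g"
    using assms(3) by blast
  define j where "j x = g (\<lambda>q. if snd q = x then \<one>\<^bsub>R\<^esub> else \<zero>\<^bsub>R\<^esub>)" for x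
  have j: "inj j"
    unfolding j_def by (rule inj_indicator[OF \<open>inj g\<close> nontrivial])
  define F where "F a = transport_module j (M a)" for a
  define S where "S a b y = j (T a b (inv_into UNIV j y))" for a b y
  note transport = transport_persistence_module[OF j pm, folded F_def S_def]
  obtain B where B: "graded_basis R M T B"
    using free graded_free_iff_graded_basis[OF pm] by blast
  have "graded_basis R F S ((\<lambda>k. (fst k, j (snd k))) ` B)"
    using j by (intro graded_basis_iso[OF pm transport(1) B transport(2,3)]) (auto simp: F_def transport_module_simps)
  then have "graded_free R F S"
    using graded_free_iff_graded_basis[OF transport(1)] by blast
  then show ?thesis
    unfolding graded_projective_def using transport j
    by (intro exI[of _ F] exI[of _ S] exI[of _ "\<lambda>a. j"] exI[of _ "\<lambda>a. inv_into UNIV j"] conjI allI ballI)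
      simp_all
qed

theorem theorem1p2:
  fixes R :: "('r, 'c) ring_scheme"
    and M :: "'p::lattice_ab_group_add \<Rightarrow> ('r, 'm) module"
    and T :: "'p \<Rightarrow> 'p \<Rightarrow> 'm \<Rightarrow> 'm"
  assumes "principal_domain R"
    and "persistence_module R M T"
    and "\<forall>a. fin_gen R (M a)"
    and "\<exists>g :: ('p \<times> 'm \<Rightarrow> 'r) \<Rightarrow> 'f. inj g"
  shows "graded_projective TYPE('f) R M T \<longleftrightarrow> graded_free R M T"
proof
  show "graded_free R M T" if "graded_projective TYPE('f) R M T"
    by (rule graded_projective_imp_graded_free[OF assms(1-3) that])
  have "\<one>\<^bsub>R\<^esub> \<noteq> \<zero>\<^bsub>R\<^esub>"
    using assms(1) by (simp add: principal_domain.axioms(1) domain.one_not_zero)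
  then show "graded_projective TYPE('f) R M T" if "graded_free R M T"
    by (rule graded_free_imp_graded_projective[OF _ assms(2,4) that])
qed

end
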